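(* Let $(\nu_n)_{n=1}^\infty$ be an increasing sequence of positive integers and let $\alpha=\liminf_{n\to\infty}\frac{\nu_n}{n}\in[0,\infty]$. Let \[F((\nu_n)_{n=1}^\infty)=\{x\in J\colon a_{n}(x),\ldots,a_{n+\nu_n-1}(x)\ \text{is an arithmetic progression for infinitely many}\ n\geq1\}.\] Then $\dim_{\rm H} F((\nu_n)_{n=1}^\infty)\ge \frac{1}{2(1+\alpha)}$ (interpreted as $0$ when $\alpha=\infty$).
   Context: Every irrational $x\in(0,1)$ has a regular continued fraction expansion with partial quotients $a_n(x)\in\mathbb N$, $n\ge1$. $J=\{x\in(0,1)\setminus\mathbb Q\colon a_n(x)<a_{n+1}(x)\text{ for every }n\ge1\}$. $\dim_{\rm H}$ denotes Hausdorff dimension in $[0,1]$. *)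

theory Defs
  imports "HOL-Analysis.Analysis"
begin

definition gauss_map :: "real \<Rightarrow> real" where
  "gauss_map x = frac (1 / x)"

text \<open>n-th partial quotient (n \<ge> 1) of the regular continued fraction of x in (0,1):
  a_n(x) = floor (1 / T^(n-1)(x)).\<close>
definition cf_pq :: "nat \<Rightarrow> real \<Rightarrow> nat" where
  "cf_pq n x = nat \<lfloor>1 / (gauss_map ^^ (n - 1)) x\<rfloor>"

definition J_set :: "real set" where
  "J_set = {x. 0 < x \<and> x < 1 \<and> x \<notin> \<rat> \<and> (\<forall>n\<ge>1. cf_pq n x < cf_pq (Suc n) x)}"

definition hausdorff_pre :: "real \<Rightarrow> real \<Rightarrow> real set \<Rightarrow> ennreal" where
  "hausdorff_pre s \<delta> E =
     (INF U \<in> {U :: nat \<Rightarrow> real set. E \<subseteq> (\<Union>i. U i) \<and>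
                 (\<forall>i. bounded (U i) \<and> diameter (U i) \<le> \<delta>)}.
        (\<Sum>i. ennreal (diameter (U i) powr s)))"

definition hausdorff_measure :: "real \<Rightarrow> real set \<Rightarrow> ennreal" where
  "hausdorff_measure s E = (SUP \<delta> \<in> {0<..}. hausdorff_pre s \<delta> E)"

definition hausdorff_dim :: "real set \<Rightarrow> ereal" where
  "hausdorff_dim E = Inf {ereal s | s. 0 \<le> s \<and> hausdorff_measure s E = 0}"

definition is_arith_prog :: "(nat \<Rightarrow> nat) \<Rightarrow> nat \<Rightarrow> nat \<Rightarrow> bool" where
  "is_arith_prog a n L \<longleftrightarrow> (\<exists>d::int. \<forall>k<L. int (a (n + k)) = int (a n) + int k * d)"

definition F_set :: "(nat \<Rightarrow> nat) \<Rightarrow> real set" where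
  "F_set \<nu> = {x \<in> J_set. infinite {n. 1 \<le> n \<and> is_arith_prog (\<lambda>m. cf_pq m x) n (\<nu> n)}}"

end

(*
  For 0 < s < 1 / (2 (1 + alpha)) we build a Cantor set inside F of positive s-dimensional
  Hausdorff measure. Choose block positions N j with nu (N j) < lambda N j, so sparse that the
  blocks occupy at most a fraction theta = (lambda + kappa) / (1 + lambda) < 1 of the first k
  indices. Inside the j-th block the partial quotients increase by exactly 1, so they form an
  arithmetic progression of length nu (N j); outside the blocks the gap a (i + 1) - a i - 1
  ranges freely over [0, (i + 3)^q). Points whose gaps first differ before index k are about
  prod (t < k) a t^-2 >= (k!)^(-2 (q + 1)) apart, while there are about (k!)^(q (1 - theta))
  cylinders of level k. A counting form of the mass distribution principle gives positive
  measure as soon as q (1 - theta) > 2 s (q + 1), which holds for large q once lambda is close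
  to alpha.
*)

theory Submission
  imports Defs "HOL-Real_Asymp.Real_Asymp"
begin

section \<open>Continued fractions with prescribed partial quotients\<close>

definition cf_step :: "nat \<Rightarrow> real \<Rightarrow> real" where
  "cf_step a y = 1 / (real a + y)"

lemma floor_inverse_cf_step:
  assumes "a \<ge> 1" "0 \<le> y" "y < 1"
  shows "\<lfloor>1 / cf_step a y\<rfloor> = int a"
  using assms by (simp add: cf_step_def floor_eq_iff)

lemma gauss_map_cf_step:
  assumes "a \<ge> 1" "0 \<le> y" "y < 1"
  shows "gauss_map (cf_step a y) = y"
proof -
  have "1 / cf_step a y = real a + y" using assms by (simp add: cf_step_def)
  then show ?thesis using floor_inverse_cf_step[OF assms] by (simp add: gauss_map_def frac_def)
qed

lemma cf_pq_1_cf_step: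
  assumes "a \<ge> 1" "0 \<le> y" "y < 1"
  shows "cf_pq 1 (cf_step a y) = a"
  using floor_inverse_cf_step[OF assms] by (simp add: cf_pq_def)

lemma cf_pq_Suc_cf_step:
  assumes "a \<ge> 1" "0 \<le> y" "y < 1"
  shows "cf_pq (Suc (Suc n)) (cf_step a y) = cf_pq (Suc n) y"
proof -
  have "(gauss_map ^^ Suc n) (cf_step a y) = (gauss_map ^^ n) y"
    by (simp only: funpow_Suc_right o_apply gauss_map_cf_step[OF assms])
  then show ?thesis by (simp add: cf_pq_def)
qed

lemma cf_step_bounds:
  assumes "a \<ge> 1" "0 \<le> y" "y \<le> 1"
  shows "1 / (real a + 1) \<le> cf_step a y" "cf_step a y \<le> 1 / real a" "0 < cf_step a y"
proof -
  have a: "real a \<ge> 1" using assms by simp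
  show "1 / (real a + 1) \<le> cf_step a y" "cf_step a y \<le> 1 / real a"
    unfolding cf_step_def using assms a by (intro divide_left_mono; simp)+
  show "0 < cf_step a y" unfolding cf_step_def using assms a by simp
qed

lemma cf_step_le_1:
  assumes "a \<ge> 1" "0 \<le> y" "y \<le> 1"
  shows "cf_step a y \<le> 1"
proof -
  have "1 / real a \<le> 1" using assms(1) by simp
  then show ?thesis using cf_step_bounds(2)[OF assms] by linarith
qed

lemma cf_step_dist:
  assumes "a \<ge> 1" "0 \<le> y" "0 \<le> y'"
  shows "\<bar>cf_step a y - cf_step a y'\<bar> = \<bar>y - y'\<bar> / ((real a + y) * (real a + y'))"
proof -
  have pos: "real a + y > 0" "real a + y' > 0" using assms by auto
  have "cf_step a y - cf_step a y' = (y' - y) / ((real a + y) * (real a + y'))"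
    unfolding cf_step_def using pos by (simp add: field_simps)
  then show ?thesis using pos by (simp add: abs_div abs_minus_commute)
qed

lemma cf_step_dist_le:
  assumes "a \<ge> 1" "0 \<le> y" "0 \<le> y'"
  shows "\<bar>cf_step a y - cf_step a y'\<bar> \<le> \<bar>y - y'\<bar> * (1 / (real a)\<^sup>2)"
proof -
  have a: "real a \<ge> 1" using assms by simp
  have "real a * real a \<le> (real a + y) * (real a + y')"
    using assms a by (intro mult_mono) auto
  then have "\<bar>y - y'\<bar> / ((real a + y) * (real a + y')) \<le> \<bar>y - y'\<bar> / (real a * real a)"
    using a assms by (intro divide_left_mono) auto
  then show ?thesis using cf_step_dist[OF assms] by (simp add: power2_eq_square)
qed

lemma cf_step_dist_ge:
  assumes "a \<ge> 1" "0 \<le> y" "0 \<le> y'" "y \<le> 1" "y' \<le> 1"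
  shows "\<bar>y - y'\<bar> * (1 / (real a + 1)\<^sup>2) \<le> \<bar>cf_step a y - cf_step a y'\<bar>"
proof -
  have a: "real a \<ge> 1" using assms by simp
  have "(real a + y) * (real a + y') \<le> (real a + 1) * (real a + 1)"
    using assms a by (intro mult_mono) auto
  then have "\<bar>y - y'\<bar> / ((real a + 1) * (real a + 1)) \<le> \<bar>y - y'\<bar> / ((real a + y) * (real a + y'))"
    using a assms by (intro divide_left_mono) auto
  then show ?thesis using cf_step_dist[OF assms(1-3)] by (simp add: power2_eq_square)
qed

lemma isCont_cf_step:
  assumes "a \<ge> 1" "0 \<le> y"
  shows "isCont (cf_step a) y"
  unfolding cf_step_def using assms by (intro continuous_intros) auto

text \<open>\<open>cf_prefix_map s n y\<close> is the continued fraction \<open>[0; s 0, \<dots>, s (n - 1) + y]\<close>.\<close>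

fun cf_prefix_map :: "(nat \<Rightarrow> nat) \<Rightarrow> nat \<Rightarrow> real \<Rightarrow> real" where
  "cf_prefix_map s 0 y = y"
| "cf_prefix_map s (Suc n) y = cf_prefix_map s n (cf_step (s n) y)"

lemma cf_prefix_map_add:
  "cf_prefix_map s (n + k) y = cf_prefix_map s n (cf_prefix_map (\<lambda>t. s (t + n)) k y)"
  by (induction k arbitrary: y) (simp_all add: add.commute)

lemma cf_prefix_map_cong: "\<forall>t<n. s t = s' t \<Longrightarrow> cf_prefix_map s n y = cf_prefix_map s' n y"
  by (induction n arbitrary: y) auto

lemma cf_prefix_map_range:
  assumes "\<forall>t. s t \<ge> 1" "0 \<le> y" "y \<le> 1"
  shows "0 \<le> cf_prefix_map s n y \<and> cf_prefix_map s n y \<le> 1"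
  using assms(2,3)
proof (induction n arbitrary: y)
  case (Suc n)
  then show ?case
    using cf_step_bounds(3)[of "s n" y] cf_step_le_1[of "s n" y] assms(1) by (simp add: less_imp_le)
qed simp

lemma cf_prefix_map_dist_le:
  assumes "\<forall>t. s t \<ge> 1" "0 \<le> y" "y \<le> 1" "0 \<le> y'" "y' \<le> 1"
  shows "\<bar>cf_prefix_map s n y - cf_prefix_map s n y'\<bar> \<le> \<bar>y - y'\<bar> * (\<Prod>t<n. 1 / (real (s t))\<^sup>2)"
  using assms(2-5)
proof (induction n arbitrary: y y')
  case (Suc n)
  let ?z = "cf_step (s n) y" and ?z' = "cf_step (s n) y'"
  have "s n \<ge> 1" using assms(1) by simp
  then have z: "0 \<le> ?z" "?z \<le> 1" "0 \<le> ?z'" "?z' \<le> 1"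
    using Suc.prems by (simp_all add: cf_step_le_1 less_imp_le[OF cf_step_bounds(3)])
  have "\<bar>cf_prefix_map s (Suc n) y - cf_prefix_map s (Suc n) y'\<bar>
      \<le> \<bar>?z - ?z'\<bar> * (\<Prod>t<n. 1 / (real (s t))\<^sup>2)"
    using Suc.IH[OF z] by simp
  also have "\<dots> \<le> (\<bar>y - y'\<bar> * (1 / (real (s n))\<^sup>2)) * (\<Prod>t<n. 1 / (real (s t))\<^sup>2)"
    using cf_step_dist_le[of "s n" y y'] \<open>s n \<ge> 1\<close> Suc.prems
    by (intro mult_right_mono prod_nonneg) simp_all
  finally show ?case by (simp add: prod.lessThan_Suc mult_ac)
qed simp

lemma cf_prefix_map_dist_ge:
  assumes "\<forall>t. s t \<ge> 1" "0 \<le> y" "y \<le> 1" "0 \<le> y'" "y' \<le> 1"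
  shows "\<bar>y - y'\<bar> * (\<Prod>t<n. 1 / (real (s t) + 1)\<^sup>2) \<le> \<bar>cf_prefix_map s n y - cf_prefix_map s n y'\<bar>"
  using assms(2-5)
proof (induction n arbitrary: y y')
  case (Suc n)
  let ?z = "cf_step (s n) y" and ?z' = "cf_step (s n) y'"
  have "s n \<ge> 1" using assms(1) by simp
  then have z: "0 \<le> ?z" "?z \<le> 1" "0 \<le> ?z'" "?z' \<le> 1"
    using Suc.prems by (simp_all add: cf_step_le_1 less_imp_le[OF cf_step_bounds(3)])
  have "\<bar>y - y'\<bar> * (\<Prod>t<Suc n. 1 / (real (s t) + 1)\<^sup>2)
      = (\<bar>y - y'\<bar> * (1 / (real (s n) + 1)\<^sup>2)) * (\<Prod>t<n. 1 / (real (s t) + 1)\<^sup>2)"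
    by (simp add: prod.lessThan_Suc mult_ac)
  also have "\<dots> \<le> \<bar>?z - ?z'\<bar> * (\<Prod>t<n. 1 / (real (s t) + 1)\<^sup>2)"
    using cf_step_dist_ge[of "s n" y y'] \<open>s n \<ge> 1\<close> Suc.prems
    by (intro mult_right_mono prod_nonneg) simp_all
  also have "\<dots> \<le> \<bar>cf_prefix_map s (Suc n) y - cf_prefix_map s (Suc n) y'\<bar>"
    using Suc.IH[OF z] by simp
  finally show ?case .
qed simp

lemma isCont_cf_prefix_map:
  assumes "\<forall>t. s t \<ge> 1" "0 \<le> y"
  shows "isCont (cf_prefix_map s n) y"
  using assms(2)
proof (induction n arbitrary: y)
  case 0
  then show ?case by (simp add: id_def[symmetric])
next
  case (Suc n)
  have "cf_prefix_map s (Suc n) = cf_prefix_map s n \<circ> cf_step (s n)" by (rule ext) simp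
  moreover have "0 \<le> cf_step (s n) y" using Suc.prems assms(1) unfolding cf_step_def by simp
  ultimately show ?case
    using continuous_at_compose isCont_cf_step Suc assms(1) by metis
qed

lemma prod_inverse_square_le_quarter_power:
  assumes "\<forall>t. s t \<ge> 2"
  shows "(\<Prod>t<n. 1 / (real (s t))\<^sup>2) \<le> (1/4)^n"
proof -
  have "(\<Prod>t<n. 1 / (real (s t))\<^sup>2) \<le> (\<Prod>t<n. (1/4::real))"
  proof (intro prod_mono conjI)
    fix t
    have "real (s t) \<ge> 2" using assms by (metis of_nat_le_iff of_nat_numeral)
    then have "(2::real)\<^sup>2 \<le> (real (s t))\<^sup>2" by (intro power_mono) auto
    then show "1 / (real (s t))\<^sup>2 \<le> 1/4" by (simp add: divide_simps)
  qed auto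
  then show ?thesis by simp
qed

lemma cf_prefix_map_tail_dist:
  assumes "\<forall>t. s t \<ge> 2" "0 \<le> y" "y \<le> 1" "0 \<le> y'" "y' \<le> 1"
  shows "\<bar>cf_prefix_map s n y - cf_prefix_map s n y'\<bar> \<le> (1/4)^n"
proof -
  have "\<forall>t. s t \<ge> 1" using assms(1) by (metis le_trans one_le_numeral)
  then have "\<bar>cf_prefix_map s n y - cf_prefix_map s n y'\<bar> \<le> \<bar>y - y'\<bar> * (\<Prod>t<n. 1 / (real (s t))\<^sup>2)"
    using cf_prefix_map_dist_le assms(2-5) by blast
  also have "\<dots> \<le> 1 * (1/4)^n"
    using assms prod_inverse_square_le_quarter_power[OF assms(1)]
    by (intro mult_mono) (auto intro!: prod_nonneg)
  finally show ?thesis by simp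
qed

definition cf_value :: "(nat \<Rightarrow> nat) \<Rightarrow> real" where
  "cf_value s = lim (\<lambda>n. cf_prefix_map s n 0)"

lemma LIMSEQ_cf_value:
  assumes "\<forall>t. s t \<ge> 2"
  shows "(\<lambda>n. cf_prefix_map s n 0) \<longlonglongrightarrow> cf_value s"
proof -
  have s1: "\<forall>t. s t \<ge> 1" using assms by (metis le_trans one_le_numeral)
  have close: "\<bar>cf_prefix_map s n 0 - cf_prefix_map s M 0\<bar> \<le> (1/4)^M" if "M \<le> n" for M n
  proof -
    have "cf_prefix_map s n 0 = cf_prefix_map s M (cf_prefix_map (\<lambda>t. s (t + M)) (n - M) 0)"
      using cf_prefix_map_add[of s M "n - M"] that by simp
    moreover have "0 \<le> cf_prefix_map (\<lambda>t. s (t + M)) (n - M) 0 \<and> cf_prefix_map (\<lambda>t. s (t + M)) (n - M) 0 \<le> 1"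
      using s1 by (intro cf_prefix_map_range) auto
    ultimately show ?thesis using cf_prefix_map_tail_dist[OF assms] by simp
  qed
  have "Cauchy (\<lambda>n. cf_prefix_map s n 0)"
  proof (rule metric_CauchyI)
    fix e :: real assume "0 < e"
    then obtain M where M: "(1/4::real)^M < e/2" using real_arch_pow_inv[of "e/2" "1/4"] by auto
    then have "dist (cf_prefix_map s m 0) (cf_prefix_map s n 0) < e" if "M \<le> m" "M \<le> n" for m n
      using close[OF that(1)] close[OF that(2)] by (simp add: dist_real_def)
    then show "\<exists>M. \<forall>m\<ge>M. \<forall>n\<ge>M. dist (cf_prefix_map s m 0) (cf_prefix_map s n 0) < e" by blast
  qed
  then show ?thesis unfolding cf_value_def by (simp add: Cauchy_convergent_iff convergent_LIMSEQ_iff)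
qed

lemma cf_value_range:
  assumes "\<forall>t. s t \<ge> 2"
  shows "0 \<le> cf_value s" "cf_value s \<le> 1"
proof -
  have "\<forall>t. s t \<ge> 1" using assms by (metis le_trans one_le_numeral)
  then have "0 \<le> cf_prefix_map s n 0 \<and> cf_prefix_map s n 0 \<le> 1" for n
    by (intro cf_prefix_map_range) auto
  then show "0 \<le> cf_value s" "cf_value s \<le> 1"
    by (auto intro: LIMSEQ_le_const[OF LIMSEQ_cf_value[OF assms]] LIMSEQ_le_const2[OF LIMSEQ_cf_value[OF assms]])
qed

lemma cf_value_eq_prefix_map:
  assumes "\<forall>t. s t \<ge> 2"
  shows "cf_value s = cf_prefix_map s n (cf_value (\<lambda>t. s (t + n)))"
proof -
  have s1: "\<forall>t. s t \<ge> 1" using assms by (metis le_trans one_le_numeral)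
  have shift: "\<forall>t. s (t + n) \<ge> 2" using assms by simp
  have "(\<lambda>k. cf_prefix_map s n (cf_prefix_map (\<lambda>t. s (t + n)) k 0))
      \<longlonglongrightarrow> cf_prefix_map s n (cf_value (\<lambda>t. s (t + n)))"
    using isCont_tendsto_compose[OF isCont_cf_prefix_map[OF s1 cf_value_range(1)[OF shift]]
        LIMSEQ_cf_value[OF shift]] .
  moreover have "(\<lambda>k. cf_prefix_map s n (cf_prefix_map (\<lambda>t. s (t + n)) k 0)) = (\<lambda>k. cf_prefix_map s (k + n) 0)"
    using cf_prefix_map_add[of s n] by (simp add: add.commute)
  ultimately show ?thesis
    using LIMSEQ_ignore_initial_segment[OF LIMSEQ_cf_value[OF assms], of n] LIMSEQ_unique by metis
qed

lemma cf_value_shift_eq_step: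
  assumes "\<forall>t. s t \<ge> 2"
  shows "cf_value (\<lambda>t. s (t + n)) = cf_step (s n) (cf_value (\<lambda>t. s (t + Suc n)))"
  using cf_value_eq_prefix_map[of "\<lambda>t. s (t + n)" 1] assms by (simp add: add.commute)

lemma cf_value_eq_step:
  assumes "\<forall>t. s t \<ge> 2"
  shows "cf_value s = cf_step (s 0) (cf_value (\<lambda>t. s (Suc t)))"
  using cf_value_shift_eq_step[OF assms, of 0] by simp

lemma cf_value_bounds:
  assumes "\<forall>t. s t \<ge> 2"
  shows "0 < cf_value s" "cf_value s \<le> 1/2"
proof -
  have tail: "\<forall>t. s (Suc t) \<ge> 2" using assms by simp
  have s0: "s 0 \<ge> 1" "real (s 0) \<ge> 2" using assms[rule_format, of 0] by linarith+
  note bounds = cf_step_bounds[OF s0(1) cf_value_range[OF tail]]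
  show "0 < cf_value s" using bounds(3) cf_value_eq_step[OF assms] by simp
  have "cf_value s \<le> 1 / real (s 0)" using bounds(2) cf_value_eq_step[OF assms] by simp
  also have "\<dots> \<le> 1/2" using s0 by (simp add: divide_simps)
  finally show "cf_value s \<le> 1/2" .
qed

lemma cf_pq_cf_value:
  assumes "\<forall>t. s t \<ge> 2"
  shows "cf_pq (Suc n) (cf_value s) = s n"
  using assms
proof (induction n arbitrary: s)
  case (0 s)
  have tail: "\<forall>t. s (Suc t) \<ge> 2" and "s 0 \<ge> 1"
    using 0 by (simp, metis le_trans one_le_numeral)
  moreover have "0 \<le> cf_value (\<lambda>t. s (Suc t))" "cf_value (\<lambda>t. s (Suc t)) < 1"
    using cf_value_range(1)[OF tail] cf_value_bounds(2)[OF tail] by simp_all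
  ultimately show ?case using cf_value_eq_step[OF 0] cf_pq_1_cf_step by simp
next
  case (Suc n s)
  have tail: "\<forall>t. s (Suc t) \<ge> 2" and "s 0 \<ge> 1"
    using Suc.prems by (simp, metis le_trans one_le_numeral)
  moreover have "0 \<le> cf_value (\<lambda>t. s (Suc t))" "cf_value (\<lambda>t. s (Suc t)) < 1"
    using cf_value_range(1)[OF tail] cf_value_bounds(2)[OF tail] by simp_all
  ultimately have "cf_pq (Suc (Suc n)) (cf_value s) = cf_pq (Suc n) (cf_value (\<lambda>t. s (Suc t)))"
    using cf_value_eq_step[OF Suc.prems] cf_pq_Suc_cf_step by simp
  also have "\<dots> = s (Suc n)" using Suc.IH[OF tail] by simp
  finally show ?case .
qed

text \<open>If the value were rational, the tails \<open>y n\<close> below would be rationals in \<open>(0, 1)\<close>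
  with strictly decreasing denominators.\<close>

lemma cf_value_not_rat:
  assumes "\<forall>t. s t \<ge> 2"
  shows "cf_value s \<notin> \<rat>"
proof
  assume "cf_value s \<in> \<rat>"
  then obtain r0 d0 :: nat where d0: "d0 \<noteq> 0" "\<bar>cf_value s\<bar> = real r0 / real d0"
    using Rats_abs_nat_div_natE by metis
  define y where "y n = cf_value (\<lambda>t. s (t + n))" for n
  have y_bounds: "0 < y n" "y n \<le> 1/2" for n
    unfolding y_def using cf_value_bounds[of "\<lambda>t. s (t + n)"] assms by auto
  have y_Suc: "y (Suc n) = 1 / y n - real (s n)" for n
  proof -
    have "y n = 1 / (real (s n) + y (Suc n))"
      using cf_value_shift_eq_step[OF assms, of n] unfolding y_def cf_step_def by simp
    then show ?thesis using y_bounds[of "Suc n"] by simp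
  qed
  have "\<exists>r d::nat. d > 0 \<and> y n = real r / real d \<and> d + n \<le> d0" for n
  proof (induction n)
    case 0
    show ?case using d0 y_bounds[of 0] unfolding y_def by (intro exI[of _ r0] exI[of _ d0]) auto
  next
    case (Suc n)
    then obtain r d :: nat where rd: "d > 0" "y n = real r / real d" "d + n \<le> d0" by blast
    have "0 < real r / real d" "real r / real d < 1" using y_bounds[of n] unfolding rd(2) by linarith+
    then have r: "r > 0" "r < d" using rd(1) by (auto simp: divide_simps)
    have y': "y (Suc n) = (real d - real (s n) * real r) / real r"
      using y_Suc[of n] rd r by (simp add: field_simps)
    then have "real d - real (s n) * real r = y (Suc n) * real r" using r by (simp add: field_simps)
    moreover have "y (Suc n) * real r > 0" using y_bounds(1)[of "Suc n"] r by simp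
    ultimately have "real (s n * r) < real d" by simp
    then have "s n * r < d" by (simp only: of_nat_less_iff)
    then have "y (Suc n) = real (d - s n * r) / real r" using y' by (simp add: of_nat_diff)
    then show ?case using r rd by (intro exI[of _ "d - s n * r"] exI[of _ r]) auto
  qed
  from this[of d0] show False by auto
qed

lemma cf_value_dist_le:
  assumes "\<forall>t. s t \<ge> 2" "\<forall>t. s' t \<ge> 2" "\<forall>t<n. s t = s' t"
  shows "\<bar>cf_value s - cf_value s'\<bar> \<le> (1/4)^n"
proof -
  have "cf_value s' = cf_prefix_map s n (cf_value (\<lambda>t. s' (t + n)))"
    using cf_value_eq_prefix_map[OF assms(2)] cf_prefix_map_cong[OF assms(3)] by simp
  moreover have "cf_value s = cf_prefix_map s n (cf_value (\<lambda>t. s (t + n)))"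
    using cf_value_eq_prefix_map[OF assms(1)] .
  moreover have "\<forall>t. s (t + n) \<ge> 2" "\<forall>t. s' (t + n) \<ge> 2" using assms(1,2) by simp_all
  ultimately show ?thesis
    using cf_prefix_map_tail_dist[OF assms(1)] cf_value_range by simp
qed

lemma cf_value_dist_ge:
  assumes "\<forall>t. s t \<ge> 2" "\<forall>t. s' t \<ge> 2" "\<forall>t<n. s t = s' t" "s n < s' n"
  shows "(\<Prod>t<n. 1 / (real (s t) + 1)\<^sup>2) / (2 * (real (s n) + 1)\<^sup>2) \<le> \<bar>cf_value s - cf_value s'\<bar>"
proof -
  have s1: "\<forall>t. s t \<ge> 1" using assms(1) by (metis le_trans one_le_numeral)
  define y y' z z' where "y = cf_value (\<lambda>t. s (t + n))" and "y' = cf_value (\<lambda>t. s' (t + n))"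
    and "z = cf_value (\<lambda>t. s (t + Suc n))" and "z' = cf_value (\<lambda>t. s' (t + Suc n))"
  have z: "0 < z" "z \<le> 1/2" "0 < z'"
    unfolding z_def z'_def using cf_value_bounds assms(1,2) by auto
  have y: "0 \<le> y" "y \<le> 1" "0 \<le> y'" "y' \<le> 1"
    unfolding y_def y'_def using cf_value_range assms(1,2) by auto
  define a where "a = real (s n)"
  have a: "a \<ge> 2" "real (s' n) \<ge> a + 1"
    using assms(1,4) unfolding a_def by (metis of_nat_le_iff of_nat_numeral, simp)
  have "y = 1 / (a + z)" "y' = 1 / (real (s' n) + z')"
    using cf_value_shift_eq_step assms(1,2) unfolding y_def y'_def z_def z'_def a_def cf_step_def
    by blast+
  then have "1 / (a + 1/2) \<le> y" "y' \<le> 1 / (a + 1)"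
    using z a by (auto intro!: divide_left_mono)
  moreover have "1 / (a + 1/2) - 1 / (a + 1) = 1 / (2 * (a + 1/2) * (a + 1))"
    using a by (simp add: field_split_simps)
  moreover have "1 / (2 * (a + 1/2) * (a + 1)) \<ge> 1 / (2 * (a + 1)\<^sup>2)"
    using a by (intro divide_left_mono) (auto simp: power2_eq_square)
  ultimately have yy: "1 / (2 * (a + 1)\<^sup>2) \<le> \<bar>y - y'\<bar>" by linarith
  have "(\<Prod>t<n. 1 / (real (s t) + 1)\<^sup>2) / (2 * (a + 1)\<^sup>2)
      \<le> \<bar>y - y'\<bar> * (\<Prod>t<n. 1 / (real (s t) + 1)\<^sup>2)"
    using mult_right_mono[OF yy, of "\<Prod>t<n. 1 / (real (s t) + 1)\<^sup>2"] by (simp add: prod_nonneg)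
  also have "\<dots> \<le> \<bar>cf_prefix_map s n y - cf_prefix_map s n y'\<bar>"
    by (rule cf_prefix_map_dist_ge[OF s1 y])
  also have "\<dots> = \<bar>cf_value s - cf_value s'\<bar>"
    using cf_value_eq_prefix_map[OF assms(1)] cf_value_eq_prefix_map[OF assms(2)]
      cf_prefix_map_cong[OF assms(3)] unfolding y_def y'_def by simp
  finally show ?thesis unfolding a_def .
qed

section \<open>A mass distribution principle\<close>

definition words :: "(nat \<Rightarrow> nat) \<Rightarrow> nat \<Rightarrow> nat list set" where
  "words m L = {w. length w = L \<and> (\<forall>i<L. w ! i < m i)}"

lemma words_0: "words m 0 = {[]}"
  unfolding words_def by auto

lemma words_Suc: "words m (Suc L) = (\<lambda>(w, a). w @ [a]) ` (words m L \<times> {..<m L})"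
proof (intro equalityI subsetI)
  fix v assume v: "v \<in> words m (Suc L)"
  then have len: "length v = Suc L" and v_lt: "\<forall>i<Suc L. v ! i < m i" unfolding words_def by auto
  then have "v = butlast v @ [last v]" by (metis append_butlast_last_id list.size(3) nat.distinct(1))
  moreover have "butlast v \<in> words m L" using len v_lt unfolding words_def by (simp add: nth_butlast)
  moreover have "last v < m L" using len v_lt last_conv_nth[of v] by fastforce
  ultimately show "v \<in> (\<lambda>(w, a). w @ [a]) ` (words m L \<times> {..<m L})" by force
qed (auto simp: words_def nth_append less_Suc_eq)

lemma finite_words: "finite (words m L)"
  by (induction L) (simp_all add: words_0 words_Suc)

lemma take_in_words: "w \<in> words m L \<Longrightarrow> k \<le> L \<Longrightarrow> take k w \<in> words m k"
  unfolding words_def by auto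

lemma card_words_take_in:
  assumes "G \<subseteq> words m k" "k \<le> L"
  shows "card {w \<in> words m L. take k w \<in> G} = card G * (\<Prod>i\<in>{k..<L}. m i)"
  using assms(2)
proof (induction L rule: dec_induct)
  case base
  have "{w \<in> words m k. take k w \<in> G} = G" using assms(1) unfolding words_def by auto
  then show ?case by simp
next
  case (step L)
  have "{w \<in> words m (Suc L). take k w \<in> G} =
      (\<lambda>(w, a). w @ [a]) ` ({w \<in> words m L. take k w \<in> G} \<times> {..<m L})"
    using step.hyps(1) unfolding words_Suc by (auto simp: words_def image_iff)
  moreover have "inj_on (\<lambda>(w, a). w @ [a]) X" for X :: "(nat list \<times> nat) set"
    by (auto simp: inj_on_def)
  ultimately have "card {w \<in> words m (Suc L). take k w \<in> G}
      = card {w \<in> words m L. take k w \<in> G} * m L"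
    by (simp add: card_image card_cartesian_product)
  then show ?case using step by (simp add: prod.atLeastLessThan_Suc)
qed

lemma card_words_split:
  assumes "k \<le> L"
  shows "card (words m L) = card (words m k) * (\<Prod>i\<in>{k..<L}. m i)"
proof -
  have "{w \<in> words m L. take k w \<in> words m k} = words m L" using assms unfolding words_def by auto
  then show ?thesis using card_words_take_in[of "words m k" m k L] assms by simp
qed

lemma card_words: "card (words m L) = (\<Prod>i<L. m i)"
  using card_words_split[of 0 L m] by (simp add: words_0 atLeast0LessThan)

definition initial_word :: "nat \<Rightarrow> (nat \<Rightarrow> 'a) \<Rightarrow> 'a list" where
  "initial_word L c = map c [0..<L]"

lemma take_initial_word: "k \<le> L \<Longrightarrow> take k (initial_word L c) = initial_word k c"
  unfolding initial_word_def by (simp add: take_map)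

lemma initial_word_eq_iff: "initial_word L c = initial_word L c' \<longleftrightarrow> (\<forall>i<L. c i = c' i)"
  unfolding initial_word_def by (auto simp: list_eq_iff_nth_eq)

lemma words_extend:
  assumes "w \<in> words m L" "\<forall>i. m i \<ge> 1"
  obtains c where "\<forall>i. c i < m i" "initial_word L c = w"
proof
  define c where "c i = (if i < L then w ! i else 0)" for i
  show "\<forall>i. c i < m i" using assms unfolding c_def words_def by (auto simp: Suc_le_eq)
  show "initial_word L c = w" using assms unfolding c_def words_def initial_word_def
    by (auto simp: list_eq_iff_nth_eq)
qed

lemma separated_set_spread:
  fixes Y :: "real set"
  assumes "finite Y" "Y \<noteq> {}" "\<forall>y\<in>Y. \<forall>y'\<in>Y. y \<noteq> y' \<longrightarrow> e \<le> \<bar>y - y'\<bar>"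
  shows "\<exists>y\<in>Y. \<exists>y'\<in>Y. real (card Y - 1) * e \<le> y' - y"
  using assms
proof (induction Y rule: finite_linorder_max_induct)
  case (insert b Y)
  show ?case
  proof (cases "Y = {}")
    case False
    then obtain y y' where y: "y \<in> Y" "y' \<in> Y" "real (card Y - 1) * e \<le> y' - y"
      using insert by auto
    have "e \<le> b - y'" using insert.prems(2) insert.hyps(2) y(2) by fastforce
    moreover have "b \<notin> Y" using insert.hyps(2) by blast
    then have "card (insert b Y) - 1 = (card Y - 1) + 1"
      using insert.hyps(1) False by (simp add: Suc_le_eq card_gt_0_iff)
    ultimately show ?thesis using y by (intro bexI[of _ y] bexI[of _ b]) (auto simp: algebra_simps)
  qed simp
qed simp

lemma min_le_powr_interpolation:
  fixes a b s :: real
  assumes "0 < a" "0 < b" "0 \<le> s" "s \<le> 1"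
  shows "min a b \<le> a powr (1 - s) * b powr s"
proof -
  have "min a b = min a b powr (1 - s) * min a b powr s"
    using assms by (simp add: powr_add[symmetric])
  also have "\<dots> \<le> a powr (1 - s) * b powr s"
    using assms by (intro mult_mono powr_mono2) auto
  finally show ?thesis .
qed

lemma max_powr_le_add:
  fixes a b s :: real
  assumes "0 \<le> a" "0 \<le> b" "0 \<le> s"
  shows "max a b powr s \<le> a powr s + b powr s"
  using assms by (cases "a \<le> b") (auto simp: max_def)

lemma bounded_open_neighbourhood:
  fixes U :: "real set"
  assumes "bounded U" "diameter U \<le> M" "0 < M"
  shows "\<exists>V. open V \<and> U \<subseteq> V \<and> (\<forall>x\<in>V. \<forall>y\<in>V. \<bar>x - y\<bar> < 2 * M)"
proof (intro exI conjI)
  let ?V = "\<Union>x\<in>U. ball x (M / 2)"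
  show "open ?V" "U \<subseteq> ?V" using assms(3) by auto
  show "\<forall>x\<in>?V. \<forall>y\<in>?V. \<bar>x - y\<bar> < 2 * M"
  proof (intro ballI)
    fix x y assume "x \<in> ?V" "y \<in> ?V"
    then obtain a b where ab: "a \<in> U" "b \<in> U" "dist a x < M / 2" "dist b y < M / 2" by auto
    have "dist a b \<le> M" using diameter_bounded_bound[OF assms(1) ab(1,2)] assms(2) by linarith
    then show "\<bar>x - y\<bar> < 2 * M" using ab(3,4) unfolding dist_real_def by arith
  qed
qed

lemma sum_half_powers_le_1: "finite D \<Longrightarrow> (\<Sum>i\<in>D. (1/2::real) ^ Suc i) \<le> 1"
  using sum_le_suminf[of "\<lambda>i. (1/2::real) ^ Suc i" D] power_half_series sums_unique
  by (fastforce simp: summable_geometric_iff)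

lemma small_radii:
  fixes \<delta> e s :: real
  assumes "0 < \<delta>" "0 < e" "0 < s"
  shows "\<exists>\<rho> :: nat \<Rightarrow> real. (\<forall>i. 0 < \<rho> i \<and> \<rho> i \<le> \<delta>) \<and>
    (\<forall>D. finite D \<longrightarrow> (\<Sum>i\<in>D. \<rho> i powr s) \<le> e)"
proof -
  define \<rho> where "\<rho> i = min \<delta> ((e * (1/2) ^ Suc i) powr (1/s))" for i
  have "0 < \<rho> i \<and> \<rho> i \<le> \<delta>" for i unfolding \<rho>_def using assms by auto
  have "\<rho> i powr s \<le> e * (1/2) ^ Suc i" for i
  proof -
    have "\<rho> i powr s \<le> ((e * (1/2) ^ Suc i) powr (1/s)) powr s"
      unfolding \<rho>_def using assms by (intro powr_mono2) auto
    also have "\<dots> = e * (1/2) ^ Suc i" using assms by (simp add: powr_powr)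
    finally show ?thesis .
  qed
  then have "(\<Sum>i\<in>D. \<rho> i powr s) \<le> (\<Sum>i\<in>D. e * (1/2) ^ Suc i)" for D
    by (rule sum_mono)
  also have "(\<Sum>i\<in>D. e * (1/2) ^ Suc i) \<le> e * 1" if "finite D" for D
    unfolding sum_distrib_left[symmetric]
    using mult_left_mono[OF sum_half_powers_le_1[OF that], of e] assms(2) by simp
  finally have "(\<Sum>i\<in>D. \<rho> i powr s) \<le> e" if "finite D" for D using that by simp
  with \<open>\<And>i. 0 < \<rho> i \<and> \<rho> i \<le> \<delta>\<close> show ?thesis by blast
qed

text \<open>A counting form of the mass distribution principle. The mass condition bounds the uniform mass
  \<open>1 / (\<Prod>i<k-1. m i)\<close> of a cylinder of level \<open>k - 1\<close> by \<open>sep k powr s / c0\<close>;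
  hence a set of diameter \<open>r\<close> meets at most a \<open>(2 r) powr s / c0\<close> fraction of the
  cylinders of any deep level, and the image has positive \<open>s\<close>-dimensional Hausdorff measure.\<close>

locale cantor_scheme =
  fixes m :: "nat \<Rightarrow> nat" and f :: "(nat \<Rightarrow> nat) \<Rightarrow> real" and sep :: "nat \<Rightarrow> real"
    and s c0 :: real
  assumes letters_pos: "\<forall>i. m i \<ge> 1"
    and compact_image: "compact (f ` {c. \<forall>i. c i < m i})"
    and sep_dist: "\<And>k c c'. \<forall>i. c i < m i \<Longrightarrow> \<forall>i. c' i < m i \<Longrightarrow> \<exists>i<k. c i \<noteq> c' i
                 \<Longrightarrow> sep k \<le> \<bar>f c - f c'\<bar>"
    and sep_pos: "\<And>k. sep k > 0" and sep_small: "\<And>r. r > 0 \<Longrightarrow> \<exists>k. sep k \<le> r"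
    and mass: "\<And>k. k \<ge> 1 \<Longrightarrow> c0 \<le> (\<Prod>i<k-1. real (m i)) * sep k powr s"
    and s_pos: "0 < s" and s_le_1: "s \<le> 1" and c0_pos: "c0 > 0"
begin

definition codes :: "(nat \<Rightarrow> nat) set" where
  "codes = {c. \<forall>i. c i < m i}"

definition cylinder :: "nat \<Rightarrow> nat list \<Rightarrow> real set" where
  "cylinder L w = f ` {c \<in> codes. initial_word L c = w}"

definition hit_words :: "nat \<Rightarrow> real set \<Rightarrow> nat list set" where
  "hit_words L V = {w \<in> words m L. cylinder L w \<inter> V \<noteq> {}}"

lemma cylinder_sep:
  assumes "w \<noteq> w'" "x \<in> cylinder k w" "x' \<in> cylinder k w'"
  shows "sep k \<le> \<bar>x - x'\<bar>"
proof -
  obtain c c' where c: "c \<in> codes" "initial_word k c = w" "x = f c"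
    "c' \<in> codes" "initial_word k c' = w'" "x' = f c'"
    using assms(2,3) unfolding cylinder_def by auto
  then have "\<exists>i<k. c i \<noteq> c' i" using assms(1) initial_word_eq_iff by metis
  then show ?thesis using sep_dist c unfolding codes_def by auto
qed

lemma cylinder_subset_take:
  assumes "k \<le> L"
  shows "cylinder L w \<subseteq> cylinder k (take k w)"
  unfolding cylinder_def by (auto simp: take_initial_word[OF assms])

lemma hit_words_subset: "hit_words k V \<subseteq> words m k"
  unfolding hit_words_def by auto

lemma finite_hit_words: "finite (hit_words k V)"
  using finite_subset[OF hit_words_subset finite_words] .

lemma card_hit_words_refine:
  assumes "k \<le> L"
  shows "card (hit_words L V) \<le> card (hit_words k V) * (\<Prod>i\<in>{k..<L}. m i)"
proof -
  have "hit_words L V \<subseteq> {w \<in> words m L. take k w \<in> hit_words k V}"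
    using cylinder_subset_take[OF assms] take_in_words[OF _ assms]
    unfolding hit_words_def by blast
  then have "card (hit_words L V) \<le> card {w \<in> words m L. take k w \<in> hit_words k V}"
    by (intro card_mono) (simp_all add: finite_words)
  also have "\<dots> = card (hit_words k V) * (\<Prod>i\<in>{k..<L}. m i)"
    by (rule card_words_take_in[OF hit_words_subset assms])
  finally show ?thesis .
qed

lemma card_hit_words_le_1:
  assumes "\<forall>x\<in>V. \<forall>y\<in>V. \<bar>x - y\<bar> < sep k"
  shows "card (hit_words k V) \<le> 1"
proof -
  have "w = w'" if hit: "w \<in> hit_words k V" "w' \<in> hit_words k V" for w w'
  proof (rule ccontr)
    assume "w \<noteq> w'"
    obtain x x' where x: "x \<in> cylinder k w \<inter> V" "x' \<in> cylinder k w' \<inter> V"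
      using hit unfolding hit_words_def by blast
    then have "sep k \<le> \<bar>x - x'\<bar>" using cylinder_sep[OF \<open>w \<noteq> w'\<close>] by blast
    moreover have "\<bar>x - x'\<bar> < sep k" using assms x by blast
    ultimately show False by simp
  qed
  then show ?thesis by (simp add: card_le_Suc0_iff_eq finite_hit_words)
qed

lemma card_hit_words_le_spread:
  assumes "\<forall>x\<in>V. \<forall>y\<in>V. \<bar>x - y\<bar> < r" "sep k \<le> r"
  shows "real (card (hit_words k V)) \<le> 2 * r / sep k"
proof (cases "hit_words k V = {}")
  case True
  then show ?thesis using assms(2) sep_pos[of k] by simp
next
  case False
  have "\<forall>w\<in>hit_words k V. \<exists>x. x \<in> cylinder k w \<inter> V" unfolding hit_words_def by blast
  then obtain g where g: "\<forall>w\<in>hit_words k V. g w \<in> cylinder k w \<inter> V" by metis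
  have g_sep: "sep k \<le> \<bar>g w - g w'\<bar>" if "w \<in> hit_words k V" "w' \<in> hit_words k V" "w \<noteq> w'" for w w'
    using cylinder_sep[OF that(3)] g that(1,2) by blast
  have "inj_on g (hit_words k V)"
  proof (rule inj_onI, rule ccontr)
    fix w w' assume "w \<in> hit_words k V" "w' \<in> hit_words k V" "g w = g w'" "w \<noteq> w'"
    then show False using g_sep[of w w'] sep_pos[of k] by simp
  qed
  then have card_eq: "card (g ` hit_words k V) = card (hit_words k V)" by (rule card_image)
  have "\<forall>y\<in>g ` hit_words k V. \<forall>y'\<in>g ` hit_words k V. y \<noteq> y' \<longrightarrow> sep k \<le> \<bar>y - y'\<bar>"
    using g_sep by auto
  then obtain y y' where y: "y \<in> g ` hit_words k V" "y' \<in> g ` hit_words k V"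
      "real (card (g ` hit_words k V) - 1) * sep k \<le> y' - y"
    using separated_set_spread[of "g ` hit_words k V" "sep k"] False finite_hit_words by blast
  then have "y \<in> V" "y' \<in> V" using g by auto
  then have "y' - y < r" using assms(1) by fastforce
  moreover have "card (hit_words k V) \<ge> 1"
    using False finite_hit_words by (simp add: Suc_le_eq card_gt_0_iff)
  ultimately have "(real (card (hit_words k V)) - 1) * sep k < r"
    using y(3) card_eq by (simp add: of_nat_diff)
  then have "real (card (hit_words k V)) * sep k < 2 * r"
    using assms(2) by (simp add: algebra_simps)
  then show ?thesis using sep_pos[of k] by (simp add: field_simps)
qed

lemma card_hit_words_first_level:
  assumes V: "\<forall>x\<in>V. \<forall>y\<in>V. \<bar>x - y\<bar> < r" and k: "sep (Suc k) \<le> r" "r < sep k"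
  shows "real (card (hit_words (Suc k) V)) \<le> real (m k) powr (1 - s) * (2 * r / sep (Suc k)) powr s"
proof -
  have "\<forall>x\<in>V. \<forall>y\<in>V. \<bar>x - y\<bar> < sep k"
  proof (intro ballI)
    fix x y assume "x \<in> V" "y \<in> V"
    then have "\<bar>x - y\<bar> < r" using V by blast
    then show "\<bar>x - y\<bar> < sep k" using k(2) by linarith
  qed
  then have "card (hit_words k V) \<le> 1" by (rule card_hit_words_le_1)
  moreover have "card (hit_words (Suc k) V) \<le> card (hit_words k V) * m k"
    using card_hit_words_refine[of k "Suc k" V] by simp
  ultimately have "card (hit_words (Suc k) V) \<le> m k"
    by (metis mult_le_mono1 mult_1 order_trans)
  then have "real (card (hit_words (Suc k) V)) \<le> min (real (m k)) (2 * r / sep (Suc k))"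
    using card_hit_words_le_spread[OF V k(1)] by simp
  also have "\<dots> \<le> real (m k) powr (1 - s) * (2 * r / sep (Suc k)) powr s"
  proof (rule min_le_powr_interpolation)
    show "0 < real (m k)" using letters_pos by (simp add: Suc_le_eq)
    show "0 < 2 * r / sep (Suc k)" using k(1) sep_pos[of "Suc k"] by simp
  qed (use s_pos s_le_1 in auto)
  finally show ?thesis .
qed

lemma hit_words_fraction:
  assumes V: "\<forall>x\<in>V. \<forall>y\<in>V. \<bar>x - y\<bar> < r" and r: "0 < r" "r < sep 0"
  shows "\<exists>K. \<forall>L\<ge>K. real (card (hit_words L V)) / real (card (words m L)) \<le> (2 * r) powr s / c0"
proof -
  define K where "K = (LEAST K. sep K \<le> r)"
  have sep_K: "sep K \<le> r" unfolding K_def by (rule LeastI_ex) (use sep_small r in auto)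
  then obtain k where k: "K = Suc k" using r by (cases K) auto
  have sep_k: "r < sep k"
    using not_less_Least[of k "\<lambda>K. sep K \<le> r"] k unfolding K_def by force
  define M A where "M = real (m k)" and "A = real (card (words m k))"
  have M: "M \<ge> 1" using letters_pos unfolding M_def by simp
  have A: "c0 \<le> A * sep K powr s" unfolding A_def card_words k using mass[of "Suc k"] by simp
  have A_pos: "A > 0" unfolding A_def card_words using letters_pos by (simp add: Suc_le_eq prod_pos)
  have "real (card (hit_words L V)) / real (card (words m L)) \<le> (2 * r) powr s / c0"
    if L: "K \<le> L" for L
  proof -
    define Q where "Q = real (\<Prod>i\<in>{K..<L}. m i)"
    have Q: "Q > 0" using letters_pos unfolding Q_def by (simp add: Suc_le_eq prod_pos)
    have "real (card (words m L)) = A * M * Q"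
      using card_words_split[OF L, of m] card_words_split[of k "Suc k" m]
      unfolding A_def M_def Q_def k by simp
    moreover have "real (card (hit_words L V)) \<le> real (card (hit_words K V)) * Q"
      using card_hit_words_refine[OF L, of V] unfolding Q_def by (metis of_nat_le_iff of_nat_mult)
    ultimately have "real (card (hit_words L V)) / real (card (words m L))
        \<le> real (card (hit_words K V)) * Q / (A * M * Q)"
      using A_pos M Q by (simp only:) (rule divide_right_mono, auto)
    also have "\<dots> = real (card (hit_words K V)) / (A * M)"
      using Q by simp
    also have "\<dots> \<le> M powr (1 - s) * (2 * r / sep K) powr s / (A * M)"
      using card_hit_words_first_level[OF V sep_K[unfolded k] sep_k] A_pos M
      unfolding M_def k by (intro divide_right_mono) auto
    also have "\<dots> = (2 * r / sep K) powr s / (A * M powr s)"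
      using M A_pos by (simp add: powr_diff)
    also have "\<dots> \<le> (2 * r / sep K) powr s / A"
      using M A_pos s_pos by (intro divide_left_mono) (auto simp: ge_one_powr_ge_zero)
    also have "\<dots> = (2 * r) powr s / (A * sep K powr s)"
      using r sep_pos[of K] by (simp add: powr_divide)
    also have "\<dots> \<le> (2 * r) powr s / c0"
      using A c0_pos by (intro divide_left_mono) auto
    finally show ?thesis .
  qed
  then show ?thesis by blast
qed

lemma finite_cover_mass:
  assumes "\<And>i. open (V i)" "\<And>i. 0 < r i" "\<And>i. r i < sep 0"
    and "\<And>i. \<forall>x\<in>V i. \<forall>y\<in>V i. \<bar>x - y\<bar> < r i" and "f ` codes \<subseteq> (\<Union>i. V i)"
  shows "\<exists>D. finite D \<and> c0 \<le> (\<Sum>i\<in>D. (2 * r i) powr s)"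
proof -
  obtain D where D: "finite D" "f ` codes \<subseteq> (\<Union>i\<in>D. V i)"
    using compactE_image[OF compact_image[folded codes_def], of UNIV V] assms(1,5) by auto
  have "\<forall>i. \<exists>K. \<forall>L\<ge>K.
      real (card (hit_words L (V i))) / real (card (words m L)) \<le> (2 * r i) powr s / c0"
    using hit_words_fraction[OF assms(4) assms(2) assms(3)] by blast
  from choice[OF this] obtain K where K: "\<forall>i. \<forall>L\<ge>K i.
      real (card (hit_words L (V i))) / real (card (words m L)) \<le> (2 * r i) powr s / c0"
    by blast
  define L where "L = Max (insert 0 (K ` D))"
  have KL: "K i \<le> L" if "i \<in> D" for i unfolding L_def using D(1) that by auto
  have "words m L \<subseteq> (\<Union>i\<in>D. hit_words L (V i))"
  proof
    fix w assume w: "w \<in> words m L"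
    then obtain c where c: "\<forall>i. c i < m i" "initial_word L c = w"
      using words_extend letters_pos by blast
    then obtain i where "i \<in> D" "f c \<in> V i" using D(2) unfolding codes_def by blast
    moreover have "f c \<in> cylinder L w" unfolding cylinder_def codes_def using c by auto
    ultimately show "w \<in> (\<Union>i\<in>D. hit_words L (V i))" using w unfolding hit_words_def by blast
  qed
  then have "card (words m L) \<le> card (\<Union>i\<in>D. hit_words L (V i))"
    using D(1) finite_hit_words by (intro card_mono) auto
  also have "\<dots> \<le> (\<Sum>i\<in>D. card (hit_words L (V i)))" by (rule card_UN_le[OF D(1)])
  finally have "real (card (words m L)) \<le> (\<Sum>i\<in>D. real (card (hit_words L (V i))))"
    by (metis of_nat_le_iff of_nat_sum)
  moreover have "card (words m L) > 0" unfolding card_words using letters_pos by (simp add: Suc_le_eq)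
  ultimately have "1 \<le> (\<Sum>i\<in>D. real (card (hit_words L (V i))) / real (card (words m L)))"
    by (simp add: sum_divide_distrib[symmetric])
  also have "\<dots> \<le> (\<Sum>i\<in>D. (2 * r i) powr s / c0)"
    using K KL by (intro sum_mono) auto
  finally have "c0 \<le> (\<Sum>i\<in>D. (2 * r i) powr s)"
    using c0_pos by (simp add: sum_divide_distrib[symmetric] field_simps)
  then show ?thesis using D(1) by blast
qed

lemma cover_mass:
  assumes cover: "f ` codes \<subseteq> (\<Union>i. U i)"
    and U: "\<forall>i. bounded (U i) \<and> diameter (U i) \<le> sep 0 / 4"
    and \<rho>: "\<forall>i. 0 < \<rho> i \<and> \<rho> i \<le> sep 0 / 4"
  shows "\<exists>D. finite D \<and> c0 \<le> 4 powr s * (\<Sum>i\<in>D. diameter (U i) powr s + \<rho> i powr s)"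
proof -
  define M where "M i = max (diameter (U i)) (\<rho> i)" for i
  have M: "0 < M i" "M i \<le> sep 0 / 4" for i
  proof -
    show "0 < M i" unfolding M_def using \<rho> by (simp add: less_max_iff_disj)
    have "diameter (U i) \<le> sep 0 / 4" "\<rho> i \<le> sep 0 / 4" using \<rho> U by blast+
    then show "M i \<le> sep 0 / 4" unfolding M_def by (rule max.boundedI)
  qed
  have "\<exists>V. open V \<and> U i \<subseteq> V \<and> (\<forall>x\<in>V. \<forall>y\<in>V. \<bar>x - y\<bar> < 2 * M i)" for i
  proof -
    have "bounded (U i)" "diameter (U i) \<le> M i" using U unfolding M_def by auto
    then show ?thesis using M(1) by (rule bounded_open_neighbourhood)
  qed
  then have "\<forall>i. \<exists>V. open V \<and> U i \<subseteq> V \<and> (\<forall>x\<in>V. \<forall>y\<in>V. \<bar>x - y\<bar> < 2 * M i)" ..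
  from choice[OF this] obtain V
    where V: "\<forall>i. open (V i) \<and> U i \<subseteq> V i \<and> (\<forall>x\<in>V i. \<forall>y\<in>V i. \<bar>x - y\<bar> < 2 * M i)"
    by blast
  have "(\<Union>i. U i) \<subseteq> (\<Union>i. V i)" using V by (intro UN_mono) simp_all
  then have "f ` codes \<subseteq> (\<Union>i. V i)" using cover by (rule order_trans[rotated])
  then have "\<exists>D. finite D \<and> c0 \<le> (\<Sum>i\<in>D. (2 * (2 * M i)) powr s)"
  proof (rule finite_cover_mass[rotated 4])
    show "open (V i)" "\<forall>x\<in>V i. \<forall>y\<in>V i. \<bar>x - y\<bar> < 2 * M i" for i using V by simp_all
    show "0 < 2 * M i" "2 * M i < sep 0" for i using M[of i] sep_pos[of 0] by auto
  qed
  then obtain D where D: "finite D" "c0 \<le> (\<Sum>i\<in>D. (2 * (2 * M i)) powr s)" by blast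
  have "(2 * (2 * M i)) powr s \<le> 4 powr s * (diameter (U i) powr s + \<rho> i powr s)" for i
  proof -
    have "(2 * (2 * M i)) powr s = 4 powr s * M i powr s" using M(1)[of i] by (simp add: powr_mult)
    also have "\<dots> \<le> 4 powr s * (diameter (U i) powr s + \<rho> i powr s)"
      unfolding M_def using U \<rho> s_pos
      by (intro mult_left_mono max_powr_le_add) (auto intro: less_imp_le diameter_ge_0)
    finally show ?thesis .
  qed
  then have "(\<Sum>i\<in>D. (2 * (2 * M i)) powr s) \<le> (\<Sum>i\<in>D. 4 powr s * (diameter (U i) powr s + \<rho> i powr s))"
    by (rule sum_mono)
  also have "\<dots> = 4 powr s * (\<Sum>i\<in>D. diameter (U i) powr s + \<rho> i powr s)"
    by (rule sum_distrib_left[symmetric])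
  finally show ?thesis using D by (blast intro: order_trans)
qed

lemma hausdorff_pre_ge:
  assumes "f ` codes \<subseteq> E"
  shows "ennreal (c0 / (2 * 4 powr s)) \<le> hausdorff_pre s (sep 0 / 4) E"
  unfolding hausdorff_pre_def
proof (rule INF_greatest, clarify)
  fix U :: "nat \<Rightarrow> real set"
  assume cover: "E \<subseteq> (\<Union>i. U i)" and U: "\<forall>i. bounded (U i) \<and> diameter (U i) \<le> sep 0 / 4"
  define e where "e = c0 / (2 * 4 powr s)"
  have "0 < sep 0 / 4" "0 < e" using sep_pos[of 0] c0_pos unfolding e_def by simp_all
  then obtain \<rho> :: "nat \<Rightarrow> real" where \<rho>: "\<forall>i. 0 < \<rho> i \<and> \<rho> i \<le> sep 0 / 4"
    "\<forall>D. finite D \<longrightarrow> (\<Sum>i\<in>D. \<rho> i powr s) \<le> e"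
    using small_radii[OF _ _ s_pos] by blast
  have "f ` codes \<subseteq> (\<Union>i. U i)" using assms cover by (rule order_trans)
  then obtain D where D: "finite D" "c0 \<le> 4 powr s * (\<Sum>i\<in>D. diameter (U i) powr s + \<rho> i powr s)"
    using cover_mass[OF _ U \<rho>(1)] by blast
  have "(\<Sum>i\<in>D. diameter (U i) powr s + \<rho> i powr s) \<le> (\<Sum>i\<in>D. diameter (U i) powr s) + e"
    using \<rho>(2) D(1) by (simp add: sum.distrib)
  then have "4 powr s * (\<Sum>i\<in>D. diameter (U i) powr s + \<rho> i powr s)
      \<le> 4 powr s * ((\<Sum>i\<in>D. diameter (U i) powr s) + e)"
    by (rule mult_left_mono) simp
  then have "c0 \<le> 4 powr s * ((\<Sum>i\<in>D. diameter (U i) powr s) + e)" using D(2) by linarith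
  moreover have "c0 = 4 powr s * (2 * e)" unfolding e_def by simp
  ultimately have "e \<le> (\<Sum>i\<in>D. diameter (U i) powr s)" by simp
  then have "ennreal e \<le> ennreal (\<Sum>i\<in>D. diameter (U i) powr s)" by (rule ennreal_leI)
  also have "\<dots> = (\<Sum>i\<in>D. ennreal (diameter (U i) powr s))" by (rule sum_ennreal[symmetric]) simp
  also have "\<dots> \<le> (\<Sum>i. ennreal (diameter (U i) powr s))"
    by (rule sum_le_suminf) (auto simp: D(1))
  finally show "ennreal (c0 / (2 * 4 powr s)) \<le> (\<Sum>i. ennreal (diameter (U i) powr s))"
    unfolding e_def .
qed

lemma hausdorff_measure_pos:
  assumes "f ` codes \<subseteq> E"
  shows "hausdorff_measure s E \<noteq> 0"
proof -
  have "ennreal (c0 / (2 * 4 powr s)) \<le> hausdorff_pre s (sep 0 / 4) E"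
    by (rule hausdorff_pre_ge[OF assms])
  also have "\<dots> \<le> hausdorff_measure s E"
    unfolding hausdorff_measure_def using sep_pos[of 0] by (intro SUP_upper) simp
  finally have "ennreal (c0 / (2 * 4 powr s)) \<le> hausdorff_measure s E" .
  moreover have "0 < ennreal (c0 / (2 * 4 powr s))" using c0_pos by simp
  ultimately show ?thesis by (metis leD)
qed

end

lemma hausdorff_pre_antimono:
  assumes "\<delta>1 \<le> \<delta>2"
  shows "hausdorff_pre t \<delta>2 E \<le> hausdorff_pre t \<delta>1 E"
  unfolding hausdorff_pre_def
  by (rule INF_superset_mono) (auto intro: order_trans[OF _ assms])

lemma hausdorff_pre_exponent_antimono:
  assumes "0 \<le> s" "s \<le> t" "\<delta> \<le> 1"
  shows "hausdorff_pre t \<delta> E \<le> hausdorff_pre s \<delta> E"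
  unfolding hausdorff_pre_def
proof (rule INF_superset_mono)
  fix U :: "nat \<Rightarrow> real set"
  assume "U \<in> {U. E \<subseteq> (\<Union>i. U i) \<and> (\<forall>i. bounded (U i) \<and> diameter (U i) \<le> \<delta>)}"
  then have "bounded (U i)" "diameter (U i) \<le> \<delta>" for i by auto
  then have U: "bounded (U i)" "diameter (U i) \<le> 1" for i using assms(3) by (auto intro: order_trans)
  have "diameter (U i) powr t \<le> diameter (U i) powr s" for i
    using U[of i] assms diameter_ge_0[OF U(1)] by (intro powr_mono') auto
  then show "(\<Sum>i. ennreal (diameter (U i) powr t)) \<le> (\<Sum>i. ennreal (diameter (U i) powr s))"
    by (intro suminf_le ennreal_leI) auto
qed simp

lemma hausdorff_measure_zero_mono:
  assumes "0 \<le> s" "s \<le> t" "hausdorff_measure s E = 0"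
  shows "hausdorff_measure t E = 0"
proof -
  have "hausdorff_pre t \<delta> E \<le> 0" if "\<delta> > 0" for \<delta>
  proof -
    have "hausdorff_pre t \<delta> E \<le> hausdorff_pre t (min \<delta> 1) E"
      by (rule hausdorff_pre_antimono) simp
    also have "\<dots> \<le> hausdorff_pre s (min \<delta> 1) E"
      by (rule hausdorff_pre_exponent_antimono) (use assms in auto)
    also have "\<dots> \<le> hausdorff_measure s E"
      unfolding hausdorff_measure_def using that by (intro SUP_upper) auto
    finally show ?thesis using assms(3) by simp
  qed
  then show ?thesis unfolding hausdorff_measure_def by (simp add: SUP_least le_zero_eq)
qed

lemma hausdorff_dim_nonneg: "0 \<le> hausdorff_dim E"
  unfolding hausdorff_dim_def by (rule Inf_greatest) auto

lemma hausdorff_dim_geI: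
  assumes "b > 0" and pos: "\<And>s. 0 < s \<Longrightarrow> s < b \<Longrightarrow> hausdorff_measure s E \<noteq> 0"
  shows "ereal b \<le> hausdorff_dim E"
  unfolding hausdorff_dim_def
proof (rule Inf_greatest, clarify)
  fix s assume s: "0 \<le> s" "hausdorff_measure s E = 0"
  show "ereal b \<le> ereal s"
  proof (rule ccontr)
    assume "\<not> ereal b \<le> ereal s"
    then have "0 < (s + b) / 2" "(s + b) / 2 < b" "s \<le> (s + b) / 2" using s assms(1) by auto
    then show False using pos hausdorff_measure_zero_mono[OF s(1) _ s(2)] by blast
  qed
qed

section \<open>Strictly increasing partial quotients\<close>

text \<open>\<open>incr_digits c\<close> is the strictly increasing digit sequence whose gaps are recorded by
  \<open>c\<close>: runs of zeros in \<open>c\<close> produce arithmetic progressions with difference \<open>1\<close>.\<close>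

definition incr_digits :: "(nat \<Rightarrow> nat) \<Rightarrow> nat \<Rightarrow> nat" where
  "incr_digits c t = 2 + t + (\<Sum>u\<le>t. c u)"

lemma incr_digits_ge_2: "\<forall>t. incr_digits c t \<ge> 2"
  unfolding incr_digits_def by simp

lemma incr_digits_Suc: "incr_digits c (Suc t) = incr_digits c t + 1 + c (Suc t)"
  unfolding incr_digits_def by simp

lemma incr_digits_eq_lessThan: "incr_digits c t = 2 + t + (\<Sum>u<t. c u) + c t"
  unfolding incr_digits_def by (simp add: lessThan_Suc_atMost[symmetric])

lemma incr_digits_cong: "\<forall>u<n. c u = c' u \<Longrightarrow> t < n \<Longrightarrow> incr_digits c t = incr_digits c' t"
  unfolding incr_digits_def by (intro arg_cong[where f="\<lambda>x. 2 + t + x"] sum.cong) auto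

lemma incr_digits_mono: "\<forall>u. c u \<le> m u \<Longrightarrow> incr_digits c t \<le> incr_digits m t"
  unfolding incr_digits_def by (simp add: sum_mono)

definition sep_scale :: "(nat \<Rightarrow> nat) \<Rightarrow> nat \<Rightarrow> real" where
  "sep_scale m k = (\<Prod>t<k. 1 / (real (incr_digits m t) + 1)\<^sup>2) / 2"

lemma sep_scale_pos: "sep_scale m k > 0"
  unfolding sep_scale_def by (intro divide_pos_pos prod_pos) auto

lemma sep_scale_small:
  assumes "r > 0"
  shows "\<exists>k. sep_scale m k \<le> r"
proof -
  obtain k where k: "(1/4::real)^k < r" using real_arch_pow_inv[of r "1/4"] assms by auto
  have "\<forall>t. incr_digits m t + 1 \<ge> 2" unfolding incr_digits_def by simp
  from prod_inverse_square_le_quarter_power[OF this, of k]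
  have "(\<Prod>t<k. 1 / (real (incr_digits m t) + 1)\<^sup>2) \<le> (1/4)^k" by (simp add: add.commute)
  then have "sep_scale m k \<le> r" using k assms unfolding sep_scale_def by linarith
  then show ?thesis ..
qed

lemma prod_lessThan_antimono:
  fixes g :: "nat \<Rightarrow> real"
  assumes "\<forall>t. 0 \<le> g t \<and> g t \<le> 1" "a \<le> b"
  shows "prod g {..<b} \<le> prod g {..<a}"
  using assms(2)
proof (induction b rule: dec_induct)
  case (step b)
  have "prod g {..<Suc b} \<le> prod g {..<b}"
    using assms(1) by (simp add: mult_left_le prod_nonneg)
  then show ?case using step.IH by simp
qed simp

lemma sep_scale_le_first_difference:
  assumes "\<forall>u. c u \<le> m u" "\<forall>u<j. c u = c' u" "c j < c' j" "j < k"
  shows "sep_scale m k \<le> \<bar>cf_value (incr_digits c) - cf_value (incr_digits c')\<bar>"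
proof -
  let ?d = "incr_digits c" and ?g = "\<lambda>t. 1 / (real (incr_digits m t) + 1)\<^sup>2"
  have "\<forall>t. 0 \<le> ?g t \<and> ?g t \<le> 1" by simp
  then have "prod ?g {..<k} \<le> prod ?g {..<Suc j}"
    using assms(4) by (intro prod_lessThan_antimono) auto
  also have "\<dots> \<le> (\<Prod>t<Suc j. 1 / (real (?d t) + 1)\<^sup>2)"
  proof (rule prod_mono)
    fix t
    have "real (?d t) + 1 \<le> real (incr_digits m t) + 1"
      using incr_digits_mono[OF assms(1), of t] by simp
    then have "(real (?d t) + 1)\<^sup>2 \<le> (real (incr_digits m t) + 1)\<^sup>2" by (rule power_mono) simp
    then show "0 \<le> ?g t \<and> ?g t \<le> 1 / (real (?d t) + 1)\<^sup>2"
      by (simp add: frac_le)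
  qed
  finally have "sep_scale m k \<le> (\<Prod>t<j. 1 / (real (?d t) + 1)\<^sup>2) / (2 * (real (?d j) + 1)\<^sup>2)"
    unfolding sep_scale_def by simp
  also have "\<dots> \<le> \<bar>cf_value ?d - cf_value (incr_digits c')\<bar>"
  proof (rule cf_value_dist_ge[OF incr_digits_ge_2 incr_digits_ge_2])
    show "\<forall>t<j. ?d t = incr_digits c' t" using incr_digits_cong[OF assms(2)] by blast
    have "(\<Sum>u<j. c u) = (\<Sum>u<j. c' u)" using assms(2) by simp
    then show "?d j < incr_digits c' j" using assms(3) by (simp add: incr_digits_eq_lessThan)
  qed
  finally show ?thesis .
qed

lemma cf_value_incr_digits_sep:
  assumes "\<forall>i. c i < m i" "\<forall>i. c' i < m i" "\<exists>i<k. c i \<noteq> c' i"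
  shows "sep_scale m k \<le> \<bar>cf_value (incr_digits c) - cf_value (incr_digits c')\<bar>"
proof -
  define j where "j = (LEAST i. c i \<noteq> c' i)"
  obtain i where i: "i < k" "c i \<noteq> c' i" using assms(3) by blast
  have j: "c j \<noteq> c' j" "j < k" "\<forall>u<j. c u = c' u"
  proof -
    show "c j \<noteq> c' j" unfolding j_def using i(2) by (rule LeastI)
    have "j \<le> i" unfolding j_def using i(2) by (rule Least_le)
    then show "j < k" using i(1) by simp
    show "\<forall>u<j. c u = c' u" unfolding j_def using not_less_Least by blast
  qed
  show ?thesis
  proof (cases "c j < c' j")
    case True
    then show ?thesis using sep_scale_le_first_difference assms(1) j by (simp add: less_imp_le)
  next
    case False
    then have "c' j < c j" using j(1) by simp
    then show ?thesis using sep_scale_le_first_difference[of c' m j c k] assms(2) j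
      by (simp add: less_imp_le abs_minus_commute)
  qed
qed

lemma dist_fun_ge_term:
  fixes c c' :: "nat \<Rightarrow> real"
  assumes "1 \<le> dist (c i) (c' i)"
  shows "(1/2) ^ to_nat i \<le> dist c c'"
proof -
  define g where "g n = (1/2::real) ^ n * min (dist (c (from_nat n)) (c' (from_nat n))) 1" for n
  have "summable g" unfolding g_def
    by (rule summable_comparison_test'[of "\<lambda>n. (1/2::real)^n"]) (auto simp: summable_geometric_iff)
  then have "g (to_nat i) \<le> suminf g"
    using sum_le_suminf[of g "{to_nat i}"] unfolding g_def by auto
  moreover have "g (to_nat i) = (1/2) ^ to_nat i" unfolding g_def using assms by simp
  ultimately show ?thesis unfolding dist_fun_def g_def by simp
qed

definition digit_box :: "(nat \<Rightarrow> nat) \<Rightarrow> (nat \<Rightarrow> real) set" where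
  "digit_box m = PiE UNIV (\<lambda>i. real ` {..<m i})"

lemma compact_digit_box: "compact (digit_box m)"
proof -
  have "compactin (product_topology (\<lambda>i. euclidean) UNIV) (digit_box m)"
    unfolding digit_box_def by (subst compactin_PiE) (auto simp: finite_imp_compact)
  then show ?thesis by (simp add: euclidean_product_topology compactin_euclidean_iff)
qed

lemma digit_box_close_eq:
  assumes "c \<in> digit_box m" "c' \<in> digit_box m" "dist c c' < (1/2) ^ to_nat i"
  shows "c i = c' i"
proof (rule ccontr)
  assume "c i \<noteq> c' i"
  moreover obtain a b :: nat where "c i = real a" "c' i = real b"
    using assms(1,2) unfolding digit_box_def by blast
  ultimately have "1 \<le> dist (c i) (c' i)" by (simp add: dist_real_def)
  then show False using dist_fun_ge_term assms(3) by (simp add: not_le[symmetric])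
qed

lemma continuous_on_digit_box:
  "continuous_on (digit_box m) (\<lambda>c. cf_value (incr_digits (\<lambda>i. nat \<lfloor>c i\<rfloor>)))"
  unfolding continuous_on_iff
proof (intro ballI allI impI)
  fix c :: "nat \<Rightarrow> real" and e :: real assume c: "c \<in> digit_box m" and e: "0 < e"
  obtain n where n: "(1/4::real)^n < e" using real_arch_pow_inv[of e "1/4"] e by auto
  define N where "N = Max (to_nat ` {..<n})"
  have "dist (cf_value (incr_digits (\<lambda>i. nat \<lfloor>c' i\<rfloor>))) (cf_value (incr_digits (\<lambda>i. nat \<lfloor>c i\<rfloor>))) < e"
    if c': "c' \<in> digit_box m" "dist c' c < (1/2)^N" for c'
  proof -
    have "c' i = c i" if "i < n" for i
    proof (rule digit_box_close_eq[OF c'(1) c])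
      have "to_nat i \<le> N" unfolding N_def using that by auto
      then have "(1/2::real)^N \<le> (1/2)^(to_nat i)" by (intro power_decreasing) auto
      then show "dist c' c < (1/2) ^ to_nat i" using c'(2) by linarith
    qed
    then have "\<bar>cf_value (incr_digits (\<lambda>i. nat \<lfloor>c' i\<rfloor>)) - cf_value (incr_digits (\<lambda>i. nat \<lfloor>c i\<rfloor>))\<bar>
        \<le> (1/4)^n"
      using incr_digits_cong[of n "\<lambda>i. nat \<lfloor>c' i\<rfloor>" "\<lambda>i. nat \<lfloor>c i\<rfloor>"]
      by (intro cf_value_dist_le incr_digits_ge_2) auto
    then show ?thesis using n by (simp add: dist_real_def)
  qed
  then show "\<exists>d>0. \<forall>c'\<in>digit_box m. dist c' c < d \<longrightarrow>
      dist (cf_value (incr_digits (\<lambda>i. nat \<lfloor>c' i\<rfloor>))) (cf_value (incr_digits (\<lambda>i. nat \<lfloor>c i\<rfloor>))) < e"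
    by (intro exI[of _ "(1/2)^N"]) auto
qed

lemma compact_cf_value_image: "compact ((\<lambda>c. cf_value (incr_digits c)) ` {c. \<forall>i. c i < m i})"
proof -
  have "(\<lambda>c. cf_value (incr_digits c)) ` {c. \<forall>i. c i < m i}
      = (\<lambda>c. cf_value (incr_digits (\<lambda>i. nat \<lfloor>c i\<rfloor>))) ` digit_box m"
  proof (intro equalityI subsetI)
    fix x assume "x \<in> (\<lambda>c. cf_value (incr_digits c)) ` {c. \<forall>i. c i < m i}"
    then obtain c where c: "\<forall>i. c i < m i" "x = cf_value (incr_digits c)" by auto
    then have "(\<lambda>i. real (c i)) \<in> digit_box m" unfolding digit_box_def by auto
    then show "x \<in> (\<lambda>c. cf_value (incr_digits (\<lambda>i. nat \<lfloor>c i\<rfloor>))) ` digit_box m"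
      using c(2) by (auto intro!: image_eqI[of _ _ "\<lambda>i. real (c i)"])
  next
    fix x assume "x \<in> (\<lambda>c. cf_value (incr_digits (\<lambda>i. nat \<lfloor>c i\<rfloor>))) ` digit_box m"
    then obtain c where c: "c \<in> digit_box m" "x = cf_value (incr_digits (\<lambda>i. nat \<lfloor>c i\<rfloor>))" by auto
    have "nat \<lfloor>c i\<rfloor> < m i" for i
    proof -
      obtain a where "a < m i" "c i = real a" using c(1) unfolding digit_box_def by blast
      then show ?thesis by simp
    qed
    then show "x \<in> (\<lambda>c. cf_value (incr_digits c)) ` {c. \<forall>i. c i < m i}" using c(2) by auto
  qed
  then show ?thesis
    using compact_continuous_image[OF continuous_on_digit_box compact_digit_box] by simp
qed

lemma cantor_scheme_cf_value:
  assumes "\<forall>i. m i \<ge> 1" "0 < s" "s \<le> 1" "0 < c0"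
    and "\<And>k. k \<ge> 1 \<Longrightarrow> c0 \<le> (\<Prod>i<k-1. real (m i)) * sep_scale m k powr s"
  shows "cantor_scheme m (\<lambda>c. cf_value (incr_digits c)) (sep_scale m) s c0"
  by unfold_locales
    (use assms compact_cf_value_image cf_value_incr_digits_sep sep_scale_pos sep_scale_small in auto)

section \<open>Blocks of arithmetic progressions\<close>

lemma frozen_count_arith:
  fixes lam \<kappa> P X K V :: real
  assumes "0 < lam" "0 < \<kappa>" "\<kappa> < 1" "0 \<le> P" "P + X + 1 \<le> K" "X + 1 \<le> V" "V < lam * (P + 1)"
  shows "\<kappa> * P + X \<le> (lam + \<kappa>) / (1 + lam) * K"
proof -
  define th where "th = (lam + \<kappa>) / (1 + lam)"
  have th: "th - \<kappa> = lam * (1 - th)" "1 - th = (1 - \<kappa>) / (1 + lam)"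
    unfolding th_def using assms(1) by (simp_all add: field_simps)
  have "0 \<le> 1 - th" "lam * (1 - th) \<le> 1"
    using assms(1-3) unfolding th(2) by (simp_all add: field_simps)
  then have "(1 - th) * (X + 1) \<le> (1 - th) * (lam * (P + 1))"
    using assms(6,7) by (intro mult_left_mono) auto
  also have "\<dots> = (th - \<kappa>) * P + lam * (1 - th)" unfolding th(1) by (simp add: algebra_simps)
  finally have "\<kappa> * P + X \<le> th * (P + X + 1)"
    using \<open>lam * (1 - th) \<le> 1\<close> by (simp add: algebra_simps)
  also have "\<dots> \<le> th * K"
    using assms(1-3,5) unfolding th_def by (intro mult_left_mono) auto
  finally show ?thesis unfolding th_def .
qed

text \<open>Block \<open>j\<close> forces the partial quotients with indices \<open>N j, \<dots>, N j + \<nu> (N j) - 1\<close>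
  to increase by exactly \<open>1\<close>. Digit sequences are indexed from \<open>0\<close> below, so these are
  the digits \<open>block_start j, \<dots>, block_end j - 1\<close>, and the gaps at the \<open>frozen\<close>
  indices must vanish.\<close>

locale block_sequence =
  fixes \<nu> :: "nat \<Rightarrow> nat" and N :: "nat \<Rightarrow> nat" and lam \<kappa> :: real
  assumes N_pos: "\<And>j. N j \<ge> 1"
    and \<nu>_pos: "\<And>j. \<nu> (N j) \<ge> 1"
    and \<nu>_short: "\<And>j. real (\<nu> (N j)) < lam * real (N j)"
    and N_gap: "\<And>j. N j + \<nu> (N j) < N (Suc j)"
    and N_sparse: "\<And>j. real (N j - 1 + \<nu> (N j)) \<le> \<kappa> * real (N (Suc j) - 1)"
    and lam_pos: "lam > 0" and \<kappa>: "0 < \<kappa>" "\<kappa> < 1"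
begin

definition block_start :: "nat \<Rightarrow> nat" where
  "block_start j = N j - 1"

definition block_end :: "nat \<Rightarrow> nat" where
  "block_end j = block_start j + \<nu> (N j)"

definition frozen :: "nat set" where
  "frozen = {i. \<exists>j. block_start j < i \<and> i < block_end j}"

lemma block_end_less_start: "block_end j < block_start (Suc j)"
  using N_gap[of j] N_pos[of j] unfolding block_end_def block_start_def by simp

lemma strict_mono_block_start: "strict_mono block_start"
proof (rule strict_monoI_Suc)
  fix j show "block_start j < block_start (Suc j)"
    using block_end_less_start[of j] unfolding block_end_def by simp
qed

lemma mono_block_end: "mono block_end"
  unfolding mono_iff_le_Suc
proof
  fix j show "block_end j \<le> block_end (Suc j)"
    using block_end_less_start[of j] unfolding block_end_def by simp
qed

lemma last_block_before:
  assumes "block_start 0 < k"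
  obtains J where "block_start J < k" "k \<le> block_start (Suc J)"
proof -
  have ex: "\<exists>j. k \<le> block_start (Suc j)"
    using seq_suble[OF strict_mono_block_start, of "Suc k"] Suc_leD by blast
  define J where "J = (LEAST j. k \<le> block_start (Suc j))"
  have "k \<le> block_start (Suc J)" unfolding J_def using LeastI_ex[OF ex] .
  moreover have "block_start J < k"
  proof (cases J)
    case (Suc J')
    then show ?thesis using not_less_Least[of J' "\<lambda>j. k \<le> block_start (Suc j)"] unfolding J_def by simp
  qed (use assms in simp)
  ultimately show ?thesis using that by blast
qed

lemma frozen_below_subset:
  assumes "block_start J < k" "k \<le> block_start (Suc J)"
  shows "frozen \<inter> {..<k} \<subseteq> {..<if J = 0 then 0 else block_end (J - 1)} \<union> {block_start J<..<min k (block_end J)}"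
proof
  fix i assume "i \<in> frozen \<inter> {..<k}"
  then obtain j where j: "block_start j < i" "i < block_end j" "i < k" unfolding frozen_def by auto
  have "j \<le> J"
  proof (rule ccontr)
    assume "\<not> j \<le> J"
    then have "block_start (Suc J) \<le> block_start j"
      using strict_mono_block_start by (simp add: strict_mono_less_eq)
    then show False using j(1,3) assms(2) by simp
  qed
  show "i \<in> {..<if J = 0 then 0 else block_end (J - 1)} \<union> {block_start J<..<min k (block_end J)}"
  proof (cases "j = J")
    case False
    then have "block_end j \<le> block_end (J - 1)" using \<open>j \<le> J\<close> mono_block_end by (simp add: monoD)
    then show ?thesis using j(2) \<open>j \<le> J\<close> False by auto
  qed (use j in auto)
qed

lemma card_frozen_below: "real (card (frozen \<inter> {..<k})) \<le> (lam + \<kappa>) / (1 + lam) * real k"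
proof (cases "block_start 0 < k")
  case False
  have "frozen \<inter> {..<k} = {}"
  proof (intro equals0I)
    fix i assume "i \<in> frozen \<inter> {..<k}"
    then obtain j where "block_start j < i" "i < k" unfolding frozen_def by auto
    moreover have "block_start 0 \<le> block_start j"
      using strict_mono_block_start by (simp add: strict_mono_less_eq)
    ultimately show False using False by simp
  qed
  then show ?thesis using lam_pos \<kappa> by simp
next
  case True
  then obtain J where J: "block_start J < k" "k \<le> block_start (Suc J)" by (rule last_block_before)
  define E X where "E = (if J = 0 then 0 else block_end (J - 1))"
    and "X = min k (block_end J) - Suc (block_start J)"
  have "card (frozen \<inter> {..<k}) \<le> card ({..<E} \<union> {block_start J<..<min k (block_end J)})"
    using frozen_below_subset[OF J] unfolding E_def by (intro card_mono) auto
  also have "\<dots> \<le> E + X" unfolding X_def by (rule order_trans[OF card_Un_le]) simp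
  finally have "real (card (frozen \<inter> {..<k})) \<le> real E + real X" by simp
  moreover have "real E \<le> \<kappa> * real (block_start J)"
  proof (cases J)
    case (Suc J')
    then show ?thesis using N_sparse[of J'] unfolding E_def block_end_def block_start_def by simp
  qed (use \<kappa> E_def in simp)
  moreover have "\<kappa> * real (block_start J) + real X \<le> (lam + \<kappa>) / (1 + lam) * real k"
  proof (rule frozen_count_arith[OF lam_pos \<kappa>])
    show "real (block_start J) + real X + 1 \<le> real k" using J(1) unfolding X_def by linarith
    show "real X + 1 \<le> real (\<nu> (N J))"
      using \<nu>_pos[of J] unfolding X_def block_end_def by linarith
    show "real (\<nu> (N J)) < lam * (real (block_start J) + 1)"
      using \<nu>_short[of J] N_pos[of J] unfolding block_start_def by (simp add: of_nat_diff)
  qed simp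
  ultimately show ?thesis by linarith
qed

end

section \<open>The mass estimate\<close>

lemma sum_ln_ge: "real k * ln (real k) - real k \<le> (\<Sum>t<k. ln (real t + 1))"
proof (induction k)
  case (Suc k)
  have "real k * ln (real k + 1) \<le> real k * ln (real k) + 1"
  proof (cases "k = 0")
    case False
    then have k: "real k > 0" by simp
    have "1 + 1 / real k = (real k + 1) / real k" using k by (simp add: field_simps)
    then have "ln (real k + 1) - ln (real k) = ln (1 + 1 / real k)"
      using k by (simp add: ln_div)
    also have "\<dots> \<le> 1 / real k" by (rule ln_add_one_self_le_self) simp
    finally show ?thesis using k by (simp add: field_simps)
  qed simp
  then show ?case using Suc.IH by (simp add: algebra_simps)
qed simp

lemma eventually_nlogn_dominates:
  fixes A B Q :: real
  assumes "B < A"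
  shows "eventually (\<lambda>k. (B * real k + Q) * ln (real k + 2) \<le> A * (real k * ln (real k) - real k)) sequentially"
proof -
  have "((\<lambda>x. (B * x + Q) * ln (x + 2) / (x * ln x - x)) \<longlongrightarrow> B) at_top"
    by real_asymp
  then have "eventually (\<lambda>x. (B * x + Q) * ln (x + 2) / (x * ln x - x) < A) at_top"
    using assms by (rule order_tendstoD)
  moreover have "eventually (\<lambda>x::real. 0 < x * ln x - x) at_top" by real_asymp
  ultimately have "eventually (\<lambda>x. (B * x + Q) * ln (x + 2) \<le> A * (x * ln x - x)) at_top"
    by eventually_elim (simp add: divide_less_eq mult.commute)
  then show ?thesis using filterlim_real_sequentially by (rule eventually_compose_filterlim)
qed

lemma uniform_lower_bound_from_eventually:
  fixes G :: "nat \<Rightarrow> real"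
  assumes "\<And>k. k \<ge> 1 \<Longrightarrow> 0 < G k" "eventually (\<lambda>k. b \<le> G k) sequentially" "0 < b"
  shows "\<exists>c0>0. \<forall>k\<ge>1. c0 \<le> G k"
proof -
  obtain K where K: "\<And>k. K \<le> k \<Longrightarrow> b \<le> G k" using assms(2) by (auto simp: eventually_sequentially)
  define c0 where "c0 = Min (insert b (G ` {1..<K}))"
  have "c0 > 0" unfolding c0_def using assms(1,3) by (subst Min_gr_iff) auto
  moreover have "c0 \<le> G k" if "k \<ge> 1" for k
  proof (cases "k < K")
    case True
    then show ?thesis unfolding c0_def using that by (intro Min_le) auto
  next
    case False
    then have "c0 \<le> b" unfolding c0_def by (intro Min_le) auto
    then show ?thesis using K[of k] False by simp
  qed
  ultimately show ?thesis by blast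
qed

locale block_mass = block_sequence +
  fixes q :: nat and s :: real
  assumes q_pos: "q \<ge> 1" and s_pos: "0 < s" and s_le_1: "s \<le> 1"
    and exponent_gap: "real q * ((lam + \<kappa>) / (1 + lam)) < real q - 2 * s * (real q + 1)"
begin

definition digit_bound :: "nat \<Rightarrow> nat" where
  "digit_bound i = (if i \<in> frozen then 1 else (i + 3) ^ q)"

lemma digit_bound_pos: "digit_bound i \<ge> 1"
  unfolding digit_bound_def by simp

lemma incr_digits_digit_bound_le: "incr_digits digit_bound t + 1 \<le> (t + 3) ^ Suc q"
proof -
  have "digit_bound u \<le> (t + 3) ^ q" if "u \<le> t" for u
    using that power_mono[of "u + 3" "t + 3" q] unfolding digit_bound_def by simp
  then have "(\<Sum>u\<le>t. digit_bound u) \<le> (t + 1) * (t + 3) ^ q"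
    using sum_mono[of "{..t}" digit_bound "\<lambda>_. (t + 3) ^ q"] by simp
  moreover have "t + 3 \<le> (t + 3) ^ q" using q_pos by (intro self_le_power) auto
  ultimately have "incr_digits digit_bound t + 1 \<le> (t + 1) * (t + 3) ^ q + 2 * (t + 3) ^ q"
    unfolding incr_digits_def by simp
  also have "\<dots> = (t + 3) ^ Suc q" by (simp add: algebra_simps)
  finally show ?thesis .
qed

lemma ln_sep_scale_ge:
  "- ln 2 - 2 * (real q + 1) * (\<Sum>t<k. ln (real t + 3)) \<le> ln (sep_scale digit_bound k)"
proof -
  have bound: "ln (real (incr_digits digit_bound t) + 1) \<le> (real q + 1) * ln (real t + 3)" for t
  proof -
    have "real (incr_digits digit_bound t) + 1 \<le> (real t + 3) ^ Suc q"
    proof -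
      have "real (incr_digits digit_bound t + 1) \<le> real ((t + 3) ^ Suc q)"
        using incr_digits_digit_bound_le[of t] by (simp only: of_nat_le_iff)
      then show ?thesis by simp
    qed
    then have "ln (real (incr_digits digit_bound t) + 1) \<le> ln ((real t + 3) ^ Suc q)"
      by (rule ln_mono) simp
    also have "\<dots> = (real q + 1) * ln (real t + 3)"
      by (simp only: ln_realpow) simp
    finally show ?thesis .
  qed
  have "ln (sep_scale digit_bound k) = (\<Sum>t<k. - 2 * ln (real (incr_digits digit_bound t) + 1)) - ln 2"
    unfolding sep_scale_def by (simp add: ln_div ln_prod ln_realpow prod_pos)
  also have "\<dots> \<ge> (\<Sum>t<k. - 2 * ((real q + 1) * ln (real t + 3))) - ln 2"
    using bound by (intro diff_right_mono sum_mono) simp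
  moreover have "(\<Sum>t<k. - 2 * ((real q + 1) * ln (real t + 3)))
      = - 2 * (real q + 1) * (\<Sum>t<k. ln (real t + 3))"
    by (simp only: sum_distrib_left mult.assoc)
  ultimately show ?thesis by linarith
qed

lemma ln_prod_digit_bound_ge:
  assumes "k \<ge> 1"
  shows "real q * ((\<Sum>t<k. ln (real t + 3)) - ln (real k + 2)) - real q * ln (real k + 2) * ((lam + \<kappa>) / (1 + lam) * real k)
    \<le> ln (\<Prod>i<k-1. real (digit_bound i))"
proof -
  define L where "L = real q * ln (real k + 2)"
  have L: "0 \<le> L" unfolding L_def by simp
  have "real q * ln (real i + 3) - (if i \<in> frozen then L else 0) \<le> ln (real (digit_bound i))"
    if "i < k - 1" for i
    using that assms unfolding digit_bound_def L_def by (auto simp: ln_realpow intro!: mult_left_mono)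
  then have "(\<Sum>i<k-1. real q * ln (real i + 3) - (if i \<in> frozen then L else 0))
      \<le> (\<Sum>i<k-1. ln (real (digit_bound i)))"
    by (intro sum_mono) simp
  also have "\<dots> = ln (\<Prod>i<k-1. real (digit_bound i))"
    using digit_bound_pos by (simp add: ln_prod Suc_le_eq)
  finally have "real q * (\<Sum>i<k-1. ln (real i + 3)) - real (card (frozen \<inter> {..<k-1})) * L
      \<le> ln (\<Prod>i<k-1. real (digit_bound i))"
    by (simp add: sum_subtractf sum_distrib_left sum.If_cases Int_commute)
  moreover have "real q * (\<Sum>i<k-1. ln (real i + 3)) = real q * ((\<Sum>t<k. ln (real t + 3)) - ln (real k + 2))"
    using assms by (cases k) (simp_all add: add.commute)
  moreover have "(lam + \<kappa>) / (1 + lam) * real (k - 1) \<le> (lam + \<kappa>) / (1 + lam) * real k"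
    using lam_pos \<kappa> by (intro mult_left_mono) auto
  then have "real (card (frozen \<inter> {..<k-1})) \<le> (lam + \<kappa>) / (1 + lam) * real k"
    using card_frozen_below[of "k - 1"] by linarith
  then have "real (card (frozen \<inter> {..<k-1})) * L \<le> real q * ln (real k + 2) * ((lam + \<kappa>) / (1 + lam) * real k)"
    using mult_right_mono[OF _ L] unfolding L_def by (metis mult.commute)
  ultimately show ?thesis by linarith
qed

lemma mass_bound: "\<exists>c0>0. \<forall>k\<ge>1. c0 \<le> (\<Prod>i<k-1. real (digit_bound i)) * sep_scale digit_bound k powr s"
proof -
  define th A B where "th = (lam + \<kappa>) / (1 + lam)" and "A = real q - 2 * s * (real q + 1)"
    and "B = real q * th"
  have "B < A" "0 \<le> B" using exponent_gap lam_pos \<kappa> unfolding th_def A_def B_def by auto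
  define G where "G k = (\<Prod>i<k-1. real (digit_bound i)) * sep_scale digit_bound k powr s" for k
  have prod_pos: "0 < (\<Prod>i<k-1. real (digit_bound i))" for k
    using digit_bound_pos by (intro prod_pos) (simp add: Suc_le_eq)
  have sep_pos: "sep_scale digit_bound k \<noteq> 0" for k using sep_scale_pos[of digit_bound k] by simp
  have G_pos: "0 < G k" for k unfolding G_def using prod_pos sep_pos by simp
  have "eventually (\<lambda>k. (B * real k + real q) * ln (real k + 2) \<le> A * (real k * ln (real k) - real k)) sequentially"
    using \<open>B < A\<close> by (rule eventually_nlogn_dominates)
  moreover have "eventually (\<lambda>k. k \<ge> 1) sequentially" by (rule eventually_ge_at_top)
  ultimately have "eventually (\<lambda>k. exp (- s * ln 2) \<le> G k) sequentially"
    \<comment> \<open>\<open>ln (G k) \<ge> A S - (B k + q) ln (k + 2) - s ln 2\<close> with \<open>S \<ge> k ln k - k\<close>\<close>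
  proof eventually_elim
    case (elim k)
    define S where "S = (\<Sum>t<k. ln (real t + 3))"
    have "real k * ln (real k) - real k \<le> S"
      using sum_ln_ge[of k] sum_mono[of "{..<k}" "\<lambda>t. ln (real t + 1)" "\<lambda>t. ln (real t + 3)"]
      unfolding S_def by force
    then have "A * (real k * ln (real k) - real k) \<le> A * S"
      using \<open>B < A\<close> \<open>0 \<le> B\<close> by (intro mult_left_mono) auto
    moreover have "real q * (S - ln (real k + 2)) - real q * ln (real k + 2) * (th * real k)
        \<le> ln (\<Prod>i<k-1. real (digit_bound i))"
      using ln_prod_digit_bound_ge[OF elim(2)] unfolding S_def th_def .
    moreover have "s * (- ln 2 - 2 * (real q + 1) * S) \<le> s * ln (sep_scale digit_bound k)"
      using ln_sep_scale_ge[of k] s_pos unfolding S_def by (intro mult_left_mono) auto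
    moreover have "ln (G k) = ln (\<Prod>i<k-1. real (digit_bound i)) + s * ln (sep_scale digit_bound k)"
      unfolding G_def using prod_pos[of k] sep_pos[of k] by (subst ln_mult_pos) auto
    ultimately have "- s * ln 2 \<le> ln (G k)"
      using elim(1) unfolding A_def B_def by (simp add: algebra_simps)
    then have "exp (- s * ln 2) \<le> exp (ln (G k))" by simp
    then show ?case using G_pos[of k] by simp
  qed
  then show ?thesis using uniform_lower_bound_from_eventually[of G] G_pos unfolding G_def by auto
qed

lemma incr_digits_in_block:
  assumes "\<forall>i. c i < digit_bound i" "k < \<nu> (N j)"
  shows "incr_digits c (block_start j + k) = incr_digits c (block_start j) + k"
  using assms(2)
proof (induction k)
  case (Suc k)
  then have "block_start j + Suc k \<in> frozen"
    unfolding frozen_def block_end_def by (intro CollectI exI[of _ j]) simp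
  then have "c (Suc (block_start j + k)) = 0"
    using assms(1) unfolding digit_bound_def by (metis add_Suc_right less_one)
  then show ?case using Suc by (simp add: incr_digits_Suc)
qed simp

lemma cf_value_in_F_set:
  assumes c: "\<forall>i. c i < digit_bound i"
  shows "cf_value (incr_digits c) \<in> F_set \<nu>"
proof -
  let ?x = "cf_value (incr_digits c)"
  have pq: "cf_pq (Suc n) ?x = incr_digits c n" for n by (rule cf_pq_cf_value[OF incr_digits_ge_2])
  have "?x \<in> J_set" unfolding J_set_def
  proof (intro CollectI conjI allI impI)
    show "0 < ?x" "?x \<notin> \<rat>"
      using cf_value_bounds(1) cf_value_not_rat incr_digits_ge_2 by blast+
    have "?x \<le> 1/2" using cf_value_bounds(2) incr_digits_ge_2 by blast
    then show "?x < 1" by simp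
    show "cf_pq n ?x < cf_pq (Suc n) ?x" if "1 \<le> n" for n
      using that pq incr_digits_Suc by (cases n) auto
  qed
  moreover have "is_arith_prog (\<lambda>n. cf_pq n ?x) (N j) (\<nu> (N j))" for j
    unfolding is_arith_prog_def
  proof (intro exI[of _ 1] allI impI)
    fix k assume k: "k < \<nu> (N j)"
    have N_eq: "N j = Suc (block_start j)" unfolding block_start_def using N_pos[of j] by simp
    show "int (cf_pq (N j + k) ?x) = int (cf_pq (N j) ?x) + int k * 1"
      unfolding N_eq using pq incr_digits_in_block[OF c k] by simp
  qed
  moreover have "strict_mono N"
  proof (rule strict_monoI_Suc)
    fix j show "N j < N (Suc j)" using N_gap[of j] by simp
  qed
  then have "infinite (range N)" by (simp add: strict_mono_imp_inj_on range_inj_infinite)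
  ultimately show ?thesis
    unfolding F_set_def using N_pos by (auto elim!: infinite_super[rotated])
qed

lemma hausdorff_measure_F_set_pos: "hausdorff_measure s (F_set \<nu>) \<noteq> 0"
proof -
  obtain c0 where c0: "c0 > 0" "\<forall>k\<ge>1. c0 \<le> (\<Prod>i<k-1. real (digit_bound i)) * sep_scale digit_bound k powr s"
    using mass_bound by blast
  interpret cantor_scheme digit_bound "\<lambda>c. cf_value (incr_digits c)" "sep_scale digit_bound" s c0
    using digit_bound_pos s_pos s_le_1 c0 by (intro cantor_scheme_cf_value) auto
  have "(\<lambda>c. cf_value (incr_digits c)) ` codes \<subseteq> F_set \<nu>"
    unfolding codes_def using cf_value_in_F_set by blast
  then show ?thesis by (rule hausdorff_measure_pos)
qed

end

section \<open>Choosing the blocks\<close>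

lemma block_parameters:
  fixes a s :: real
  assumes "0 \<le> a" "0 < s" "s < 1 / (2 * (1 + a))"
  obtains lam \<kappa> :: real and q :: nat where "a < lam" "0 < \<kappa>" "\<kappa> < 1" "q \<ge> 1" "s \<le> 1"
    "real q * ((lam + \<kappa>) / (1 + lam)) < real q - 2 * s * (real q + 1)"
proof -
  define \<tau> where "\<tau> = 2 * s * (1 + a)"
  have \<tau>: "0 < \<tau>" "\<tau> < 1" using assms unfolding \<tau>_def by (simp, simp add: field_simps)
  \<comment> \<open>then \<open>2 s (1 + lam) = (1 + \<tau>) / 2 < 1 - \<kappa>\<close>, which leaves room for a large \<open>q\<close>\<close>
  define lam \<kappa> where "lam = a + (1 - \<tau>) / (4 * s)" and "\<kappa> = (1 - \<tau>) / 8"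
  have "0 < (1 - \<tau>) / (4 * s)" using assms(2) \<tau> by simp
  then have lam: "a < lam" "0 < lam" using assms(1) unfolding lam_def by linarith+
  have \<kappa>: "0 < \<kappa>" "\<kappa> < 1" using \<tau> unfolding \<kappa>_def by auto
  have "s \<le> \<tau>" unfolding \<tau>_def using assms(1,2) mult_nonneg_nonneg[of s a] by (simp add: algebra_simps)
  then have "s \<le> 1" using \<tau> by linarith
  obtain q :: nat where q: "real q > 2 * (1 + \<tau>) / (1 - \<tau>)" using reals_Archimedean2 by blast
  then have "q \<ge> 1" using \<tau> by (cases q) (auto simp: divide_simps)
  have "2 * s * (real q + 1) * (1 + lam) = (2 * s * (1 + lam)) * (real q + 1)"
    by (simp add: algebra_simps)
  also have "2 * s * (1 + lam) = (1 + \<tau>) / 2"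
    unfolding lam_def \<tau>_def using assms(2) by (simp add: field_simps)
  also have "(1 + \<tau>) / 2 * (real q + 1) < real q * (1 - \<kappa>)"
    using q \<tau> unfolding \<kappa>_def by (simp add: field_simps)
  finally have "real q * ((lam + \<kappa>) / (1 + lam)) < real q - 2 * s * (real q + 1)"
    using lam by (simp add: field_simps)
  then show ?thesis using that lam \<kappa> \<open>q \<ge> 1\<close> \<open>s \<le> 1\<close> by blast
qed

lemma frequently_below_liminf:
  fixes \<nu> :: "nat \<Rightarrow> nat"
  assumes "liminf (\<lambda>n. ereal (real (\<nu> n) / real n)) = ereal a" "a < lam"
  shows "\<exists>n>M. real (\<nu> n) < lam * real n"
proof -
  obtain n where n: "n > M" "ereal (real (\<nu> n) / real n) < ereal lam"
    using liminf_upper_bound[of "\<lambda>n. ereal (real (\<nu> n) / real n)" lam M] assms by auto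
  then have "real (\<nu> n) < lam * real n" by (simp add: divide_less_eq)
  then show ?thesis using n(1) by blast
qed

lemma exists_block_sequence:
  assumes pos: "\<forall>n\<ge>1. 1 \<le> \<nu> n" and freq: "\<And>M. \<exists>n>M. real (\<nu> n) < lam * real n"
    and "lam > 0" "0 < \<kappa>" "\<kappa> < 1"
  shows "\<exists>N. block_sequence \<nu> N lam \<kappa>"
proof -
  obtain g where g: "\<And>M. M < g M" "\<And>M. real (\<nu> (g M)) < lam * real (g M)"
    using freq by metis
  define next_start where "next_start n = n + \<nu> n + nat \<lceil>real (n + \<nu> n) / \<kappa>\<rceil>" for n
  define N where "N j = rec_nat (g 0) (\<lambda>_ n. g (next_start n)) j" for j
  have N_Suc: "N (Suc j) = g (next_start (N j))" for j unfolding N_def by simp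
  have N_g: "\<exists>M. N j = g M" for j by (cases j) (auto simp: N_def)
  show ?thesis
  proof (intro exI[of _ N] block_sequence.intro allI)
    show N_pos: "N j \<ge> 1" for j
    proof -
      obtain M where "N j = g M" using N_g by blast
      then show ?thesis using g(1)[of M] by simp
    qed
    show "\<nu> (N j) \<ge> 1" for j using pos N_pos[of j] by blast
    show "real (\<nu> (N j)) < lam * real (N j)" for j using N_g[of j] g(2) by metis
    show "N j + \<nu> (N j) < N (Suc j)" for j
      using g(1)[of "next_start (N j)"] unfolding N_Suc next_start_def by simp
    show "real (N j - 1 + \<nu> (N j)) \<le> \<kappa> * real (N (Suc j) - 1)" for j
    proof -
      define P where "P = N j + \<nu> (N j)"
      have "real P / \<kappa> \<le> real (nat \<lceil>real P / \<kappa>\<rceil>)" by (rule real_nat_ceiling_ge)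
      also have "\<dots> \<le> real (N (Suc j) - 1)"
        using g(1)[of "next_start (N j)"] unfolding N_Suc next_start_def P_def by simp
      finally have "real P \<le> \<kappa> * real (N (Suc j) - 1)" using assms(4) by (simp add: field_simps)
      then show ?thesis unfolding P_def by simp
    qed
  qed (use assms in auto)
qed

lemma hausdorff_measure_F_set_pos_liminf:
  fixes \<nu> :: "nat \<Rightarrow> nat"
  assumes pos: "\<forall>n\<ge>1. 1 \<le> \<nu> n"
    and liminf: "liminf (\<lambda>n. ereal (real (\<nu> n) / real n)) = ereal a" and "0 \<le> a"
    and s: "0 < s" "s < 1 / (2 * (1 + a))"
  shows "hausdorff_measure s (F_set \<nu>) \<noteq> 0"
proof -
  obtain lam \<kappa> q where params: "a < lam" "0 < \<kappa>" "\<kappa> < 1" "q \<ge> 1" "s \<le> 1"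
      "real q * ((lam + \<kappa>) / (1 + lam)) < real q - 2 * s * (real q + 1)"
    using block_parameters[OF \<open>0 \<le> a\<close> s] by blast
  then obtain N where "block_sequence \<nu> N lam \<kappa>"
    using exists_block_sequence[OF pos frequently_below_liminf[OF liminf]] \<open>0 \<le> a\<close> by force
  then interpret block_mass \<nu> N lam \<kappa> q s
    using params s by (intro block_mass.intro block_mass_axioms.intro) auto
  show ?thesis by (rule hausdorff_measure_F_set_pos)
qed

theorem proposition4p1:
  fixes \<nu> :: "nat \<Rightarrow> nat" and \<alpha> :: ereal
  assumes pos: "\<forall>n\<ge>1. 1 \<le> \<nu> n"
    and incr: "\<forall>n\<ge>1. \<nu> n \<le> \<nu> (Suc n)"
    and alpha: "\<alpha> = liminf (\<lambda>n. ereal (real (\<nu> n) / real n))"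
  shows "hausdorff_dim (F_set \<nu>) \<ge>
           (if \<alpha> = \<infinity> then 0 else ereal (1 / (2 * (1 + real_of_ereal \<alpha>))))"
proof (cases "\<alpha> = \<infinity>")
  case True
  then show ?thesis using hausdorff_dim_nonneg by simp
next
  case False
  have "0 \<le> \<alpha>" unfolding alpha by (rule Liminf_bounded) (auto intro!: always_eventually)
  with False obtain a where a: "\<alpha> = ereal a" "0 \<le> a" by (cases \<alpha>) auto
  have "ereal (1 / (2 * (1 + a))) \<le> hausdorff_dim (F_set \<nu>)"
    using a alpha hausdorff_measure_F_set_pos_liminf[OF pos] by (intro hausdorff_dim_geI) auto
  then show ?thesis using a by simp
qed

end
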